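(* (Work in $\mathsf{ZFC}$.) Let $\mathcal S$ be a countable vocabulary of function symbols and predicate symbols of finite arity, containing the binary predicate symbols $=,\neq,\in,\notin$. Let $T$ be a set of $\Sigma(L_{\omega\omega}(\mathcal S))$ conditionals and let $\chi\Rightarrow\chi'$ be a $\Sigma(L_{\omega\omega}(\mathcal S))$ conditional. Then either $\chi\Rightarrow\chi'$ has a finitary positivistic proof from the axioms of $T$ together with the logical axioms (L1)–(L23) listed below, or there is an admissible structure $M$ that models every conditional of $T$ but in which, for some assignment of elements to the free variables, $\chi$ holds and $\chi'$ fails. Logical axioms (here free and bound variables are kept distinct: $x,y$ denote bound variables, $a$ a free variable, $r,s,t$ terms, $\phi,\psi,\chi$ arbitrary $\Sigma$ formulas, and $\phi^x_t$ denotes substitution of $t$ for $x$): (L1) $\phi\Rightarrow\top$; (L2) $\bot\Rightarrow\psi$; (L3) $\phi\wedge\psi\Rightarrow\phi$; (L4) $\phi\wedge\psi\Rightarrow\psi$; (L5) $\phi\Rightarrow\phi\wedge\phi$; (L6) $\phi\Rightarrow\phi\vee\psi$; (L7) $\psi\Rightarrow\phi\vee\psi$; (L8) $\psi\vee\psi\Rightarrow\psi$; (L9) $(\phi\vee\psi)\wedge\chi\Rightarrow(\phi\wedge\chi)\vee(\psi\wedge\chi)$; (L10) $\phi^x_t\Rightarrow\exists x\,\phi$; (L11) $\exists y\,\psi\Rightarrow\psi$; (L12) $\chi\wedge\exists y\,\phi\Rightarrow\exists y\,(\chi\wedge\phi)$; (L13) $t\in s\wedge\forall x\in s\,\phi\Rightarrow\phi^x_t$;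 (L14) $\psi\Rightarrow\forall y\in s\,(\psi\wedge y\in s)$; (L15) $\forall y\in s\,(\chi\vee\phi)\Rightarrow\chi\vee\forall y\in s\,\phi$; (L16) $\top\Rightarrow s\in t\vee s\notin t$; (L17) $s\in t\wedge s\notin t\Rightarrow\bot$; (L18) $\top\Rightarrow s=t\vee s\neq t$; (L19) $s=t\wedge s\neq t\Rightarrow\bot$; (L20) $\top\Rightarrow t=t$; (L21) $s=t\Rightarrow t=s$; (L22) $r=s\wedge s=t\Rightarrow r=t$; (L23) $s=t\wedge\phi^a_s\Rightarrow\phi^a_t$.
   Context: $\Sigma(L_{\omega\omega}(\mathcal S))$ formulas: built from atomic formulas of $\mathcal S$ (including the logical constants $\top,\bot$; the symbols $\neq,\notin$ are primitive predicate symbols, not abbreviations) using binary conjunction $\wedge$, binary disjunction $\vee$, bounded universal quantification $\forall x\in t\,\phi$ ($t$ a term), and unbounded existential quantification $\exists x\,\phi$; there is no negation and no implication. A conditional is an expression $\phi\Rightarrow\psi$ with $\phi,\psi$ $\Sigma$ formulas. An application of a conditional $\phi(v_1,\dots,v_n)\Rightarrow\psi(v_1,\dots,v_n)$ (where $v_1,\dots,v_n$ include its free variables) is a pair $(\chi_0,\chi_1)$ of $\Sigma$ formulas such that $\chi_1$ is obtained from $\chi_0$ by replacing one occurrence of a subformula of the form $\phi(t_1,\dots,t_n)$ by $\psi(t_1,\dots,t_n)$, where the terms $t_i$ may contain variables bound in $\chi_0$ ("deep inference"). A finitary positivistic proof of $\chi\Rightarrow\chi'$ from a set of conditionals (axioms)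 is a finite sequence $\chi_0=\chi,\chi_1,\dots,\chi_n=\chi'$ of $\Sigma$ formulas such that each $(\chi_i,\chi_{i+1})$ is an application of some axiom. An admissible structure for $\mathcal S$ is a structure in which $=$ is genuine equality, $\neq$ is interpreted as the complement of $=$, and $\notin$ as the complement of the interpretation of $\in$. A structure models a conditional $\phi\Rightarrow\psi$ if it satisfies the universal closure of $\phi\to\psi$. *)

theory Defs
  imports Main "HOL-Library.Countable"
begin

text \<open>Function symbols range over a countable
type 'f (constants are 0-ary function symbols); the predicate symbols are the
four distinguished binary symbols =, ~=, in, notin together with the
symbols of a countable type 'p.  Arities are given by functions
arF :: 'f => nat and arP :: 'p => nat.\<close>

datatype 'p psym = PEq | PNeq | PIn | PNin | PRel 'p

datatype 'f trm = Var nat | Fn 'f "'f trm list"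

datatype ('f, 'p) fm =
    Top
  | Bot
  | Atom "'p psym" "'f trm list"
  | Conj "('f, 'p) fm" "('f, 'p) fm"
  | Disj "('f, 'p) fm" "('f, 'p) fm"
  | BAll nat "'f trm" "('f, 'p) fm"   (* BAll x t phi  =  forall x in t. phi *)
  | Ex nat "('f, 'p) fm"

fun parity :: "('p \<Rightarrow> nat) \<Rightarrow> 'p psym \<Rightarrow> nat" where
  "parity arP (PRel p) = arP p"
| "parity arP _ = 2"

fun wf_trm :: "('f \<Rightarrow> nat) \<Rightarrow> 'f trm \<Rightarrow> bool" where
  "wf_trm arF (Var x) = True"
| "wf_trm arF (Fn f ts) = (length ts = arF f \<and> (\<forall>t\<in>set ts. wf_trm arF t))"

fun wf_fm :: "('f \<Rightarrow> nat) \<Rightarrow> ('p \<Rightarrow> nat) \<Rightarrow> ('f, 'p) fm \<Rightarrow> bool" where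
  "wf_fm arF arP Top = True"
| "wf_fm arF arP Bot = True"
| "wf_fm arF arP (Atom P ts) = (length ts = parity arP P \<and> (\<forall>t\<in>set ts. wf_trm arF t))"
| "wf_fm arF arP (Conj \<phi> \<psi>) = (wf_fm arF arP \<phi> \<and> wf_fm arF arP \<psi>)"
| "wf_fm arF arP (Disj \<phi> \<psi>) = (wf_fm arF arP \<phi> \<and> wf_fm arF arP \<psi>)"
| "wf_fm arF arP (BAll x t \<phi>) = (wf_trm arF t \<and> wf_fm arF arP \<phi>)"
| "wf_fm arF arP (Ex x \<phi>) = wf_fm arF arP \<phi>"

text \<open>A conditional phi => psi is represented by the pair (phi, psi).\<close>

type_synonym ('f, 'p) cond = "('f, 'p) fm \<times> ('f, 'p) fm"

fun fv_trm :: "'f trm \<Rightarrow> nat set" where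
  "fv_trm (Var x) = {x}"
| "fv_trm (Fn f ts) = (\<Union>t\<in>set ts. fv_trm t)"

fun fv :: "('f, 'p) fm \<Rightarrow> nat set" where
  "fv Top = {}"
| "fv Bot = {}"
| "fv (Atom P ts) = (\<Union>t\<in>set ts. fv_trm t)"
| "fv (Conj \<phi> \<psi>) = fv \<phi> \<union> fv \<psi>"
| "fv (Disj \<phi> \<psi>) = fv \<phi> \<union> fv \<psi>"
| "fv (BAll x t \<phi>) = fv_trm t \<union> (fv \<phi> - {x})"
| "fv (Ex x \<phi>) = fv \<phi> - {x}"

fun tsubst :: "(nat \<Rightarrow> 'f trm) \<Rightarrow> 'f trm \<Rightarrow> 'f trm" where
  "tsubst \<sigma> (Var x) = \<sigma> x"
| "tsubst \<sigma> (Fn f ts) = Fn f (map (tsubst \<sigma>) ts)"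

fun subst :: "(nat \<Rightarrow> 'f trm) \<Rightarrow> ('f, 'p) fm \<Rightarrow> ('f, 'p) fm" where
  "subst \<sigma> Top = Top"
| "subst \<sigma> Bot = Bot"
| "subst \<sigma> (Atom P ts) = Atom P (map (tsubst \<sigma>) ts)"
| "subst \<sigma> (Conj \<phi> \<psi>) = Conj (subst \<sigma> \<phi>) (subst \<sigma> \<psi>)"
| "subst \<sigma> (Disj \<phi> \<psi>) = Disj (subst \<sigma> \<phi>) (subst \<sigma> \<psi>)"
| "subst \<sigma> (BAll x t \<phi>) = BAll x (tsubst \<sigma> t) (subst (\<sigma>(x := Var x)) \<phi>)"
| "subst \<sigma> (Ex x \<phi>) = Ex x (subst (\<sigma>(x := Var x)) \<phi>)"

fun substok :: "(nat \<Rightarrow> 'f trm) \<Rightarrow> ('f, 'p) fm \<Rightarrow> bool" where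
  "substok \<sigma> Top = True"
| "substok \<sigma> Bot = True"
| "substok \<sigma> (Atom P ts) = True"
| "substok \<sigma> (Conj \<phi> \<psi>) = (substok \<sigma> \<phi> \<and> substok \<sigma> \<psi>)"
| "substok \<sigma> (Disj \<phi> \<psi>) = (substok \<sigma> \<phi> \<and> substok \<sigma> \<psi>)"
| "substok \<sigma> (BAll x t \<phi>) =
     (substok (\<sigma>(x := Var x)) \<phi> \<and> (\<forall>v \<in> fv \<phi> - {x}. x \<notin> fv_trm (\<sigma> v)))"
| "substok \<sigma> (Ex x \<phi>) =
     (substok (\<sigma>(x := Var x)) \<phi> \<and> (\<forall>v \<in> fv \<phi> - {x}. x \<notin> fv_trm (\<sigma> v)))"

text \<open>phi^x_t (only used when substok (Var(x := t)) phi).\<close>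

definition subst1 :: "('f, 'p) fm \<Rightarrow> nat \<Rightarrow> 'f trm \<Rightarrow> ('f, 'p) fm" where
  "subst1 \<phi> x t = subst (Var(x := t)) \<phi>"

definition substok1 :: "('f, 'p) fm \<Rightarrow> nat \<Rightarrow> 'f trm \<Rightarrow> bool" where
  "substok1 \<phi> x t = substok (Var(x := t)) \<phi>"

inductive replace_one :: "('f, 'p) fm \<Rightarrow> ('f, 'p) fm \<Rightarrow> ('f, 'p) fm \<Rightarrow> ('f, 'p) fm \<Rightarrow> bool"
  for \<phi> \<psi> where
  here: "replace_one \<phi> \<psi> \<phi> \<psi>"
| conjL: "replace_one \<phi> \<psi> \<alpha> \<alpha>' \<Longrightarrow> replace_one \<phi> \<psi> (Conj \<alpha> \<beta>) (Conj \<alpha>' \<beta>)"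
| conjR: "replace_one \<phi> \<psi> \<beta> \<beta>' \<Longrightarrow> replace_one \<phi> \<psi> (Conj \<alpha> \<beta>) (Conj \<alpha> \<beta>')"
| disjL: "replace_one \<phi> \<psi> \<alpha> \<alpha>' \<Longrightarrow> replace_one \<phi> \<psi> (Disj \<alpha> \<beta>) (Disj \<alpha>' \<beta>)"
| disjR: "replace_one \<phi> \<psi> \<beta> \<beta>' \<Longrightarrow> replace_one \<phi> \<psi> (Disj \<alpha> \<beta>) (Disj \<alpha> \<beta>')"
| ball: "replace_one \<phi> \<psi> \<alpha> \<alpha>' \<Longrightarrow> replace_one \<phi> \<psi> (BAll x t \<alpha>) (BAll x t \<alpha>')"
| ex: "replace_one \<phi> \<psi> \<alpha> \<alpha>' \<Longrightarrow> replace_one \<phi> \<psi> (Ex x \<alpha>) (Ex x \<alpha>')"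

text \<open>(chi0, chi1) is an application of the conditional phi => psi:
chi1 is obtained from chi0 by replacing one occurrence of phi(t_1..t_n) by
psi(t_1..t_n), for terms t_i substituted (without capture) for the free
variables; the t_i may contain variables bound in chi0.\<close>

definition application :: "('f, 'p) cond \<Rightarrow> ('f, 'p) fm \<Rightarrow> ('f, 'p) fm \<Rightarrow> bool" where
  "application c \<chi>0 \<chi>1 =
     (\<exists>\<sigma>. substok \<sigma> (fst c) \<and> substok \<sigma> (snd c) \<and>
          replace_one (subst \<sigma> (fst c)) (subst \<sigma> (snd c)) \<chi>0 \<chi>1)"

abbreviation "In s t \<equiv> Atom PIn [s, t]"
abbreviation "Nin s t \<equiv> Atom PNin [s, t]"
abbreviation "Eq s t \<equiv> Atom PEq [s, t]"
abbreviation "Neq s t \<equiv> Atom PNeq [s, t]"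

text \<open>The logical axioms (L1)-(L23).  The paper keeps free and bound
variables syntactically distinct; with a single sort of variables, the
corresponding (standard) side conditions are made explicit.\<close>

inductive_set logical_axioms :: "('f, 'p) cond set" where
  L1: "(\<phi>, Top) \<in> logical_axioms"
| L2: "(Bot, \<psi>) \<in> logical_axioms"
| L3: "(Conj \<phi> \<psi>, \<phi>) \<in> logical_axioms"
| L4: "(Conj \<phi> \<psi>, \<psi>) \<in> logical_axioms"
| L5: "(\<phi>, Conj \<phi> \<phi>) \<in> logical_axioms"
| L6: "(\<phi>, Disj \<phi> \<psi>) \<in> logical_axioms"
| L7: "(\<psi>, Disj \<phi> \<psi>) \<in> logical_axioms"
| L8: "(Disj \<psi> \<psi>, \<psi>) \<in> logical_axioms"
| L9: "(Conj (Disj \<phi> \<psi>) \<chi>, Disj (Conj \<phi> \<chi>) (Conj \<psi> \<chi>)) \<in> logical_axioms"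
| L10: "substok1 \<phi> x t \<Longrightarrow> (subst1 \<phi> x t, Ex x \<phi>) \<in> logical_axioms"
| L11: "y \<notin> fv \<psi> \<Longrightarrow> (Ex y \<psi>, \<psi>) \<in> logical_axioms"
| L12: "y \<notin> fv \<chi> \<Longrightarrow> (Conj \<chi> (Ex y \<phi>), Ex y (Conj \<chi> \<phi>)) \<in> logical_axioms"
| L13: "substok1 \<phi> x t \<Longrightarrow> (Conj (In t s) (BAll x s \<phi>), subst1 \<phi> x t) \<in> logical_axioms"
| L14: "y \<notin> fv \<psi> \<Longrightarrow> y \<notin> fv_trm s \<Longrightarrow>
          (\<psi>, BAll y s (Conj \<psi> (In (Var y) s))) \<in> logical_axioms"
| L15: "y \<notin> fv \<chi> \<Longrightarrow> (BAll y s (Disj \<chi> \<phi>), Disj \<chi> (BAll y s \<phi>)) \<in> logical_axioms"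
| L16: "(Top, Disj (In s t) (Nin s t)) \<in> logical_axioms"
| L17: "(Conj (In s t) (Nin s t), Bot) \<in> logical_axioms"
| L18: "(Top, Disj (Eq s t) (Neq s t)) \<in> logical_axioms"
| L19: "(Conj (Eq s t) (Neq s t), Bot) \<in> logical_axioms"
| L20: "(Top, Eq t t) \<in> logical_axioms"
| L21: "(Eq s t, Eq t s) \<in> logical_axioms"
| L22: "(Conj (Eq r s) (Eq s t), Eq r t) \<in> logical_axioms"
| L23: "substok1 \<phi> a s \<Longrightarrow> substok1 \<phi> a t \<Longrightarrow>
          (Conj (Eq s t) (subst1 \<phi> a s), subst1 \<phi> a t) \<in> logical_axioms"

definition fin_pos_proof ::
  "('f \<Rightarrow> nat) \<Rightarrow> ('p \<Rightarrow> nat) \<Rightarrow> ('f, 'p) cond set \<Rightarrow> ('f, 'p) fm list \<Rightarrow>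
   ('f, 'p) fm \<Rightarrow> ('f, 'p) fm \<Rightarrow> bool" where
  "fin_pos_proof arF arP Ax cs \<chi> \<chi>' =
     (cs \<noteq> [] \<and> hd cs = \<chi> \<and> last cs = \<chi>' \<and>
      (\<forall>c\<in>set cs. wf_fm arF arP c) \<and>
      (\<forall>i. Suc i < length cs \<longrightarrow> (\<exists>ax\<in>Ax. application ax (cs ! i) (cs ! Suc i))))"

definition provable ::
  "('f \<Rightarrow> nat) \<Rightarrow> ('p \<Rightarrow> nat) \<Rightarrow> ('f, 'p) cond set \<Rightarrow> ('f, 'p) cond \<Rightarrow> bool" where
  "provable arF arP Ax c = (\<exists>cs. fin_pos_proof arF arP Ax cs (fst c) (snd c))"

record ('u, 'f, 'p) struc =
  dom :: "'u set"
  fint :: "'f \<Rightarrow> 'u list \<Rightarrow> 'u"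
  pint :: "'p psym \<Rightarrow> 'u list \<Rightarrow> bool"

definition is_struc :: "('f \<Rightarrow> nat) \<Rightarrow> ('u, 'f, 'p) struc \<Rightarrow> bool" where
  "is_struc arF M =
     (dom M \<noteq> {} \<and>
      (\<forall>f us. length us = arF f \<and> set us \<subseteq> dom M \<longrightarrow> fint M f us \<in> dom M))"

definition admissible :: "('f \<Rightarrow> nat) \<Rightarrow> ('u, 'f, 'p) struc \<Rightarrow> bool" where
  "admissible arF M =
     (is_struc arF M \<and>
      (\<forall>a\<in>dom M. \<forall>b\<in>dom M.
         (pint M PEq [a, b] \<longleftrightarrow> a = b) \<and>
         (pint M PNeq [a, b] \<longleftrightarrow> \<not> pint M PEq [a, b]) \<and>
         (pint M PNin [a, b] \<longleftrightarrow> \<not> pint M PIn [a, b])))"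

fun eval :: "('u, 'f, 'p) struc \<Rightarrow> (nat \<Rightarrow> 'u) \<Rightarrow> 'f trm \<Rightarrow> 'u" where
  "eval M \<rho> (Var x) = \<rho> x"
| "eval M \<rho> (Fn f ts) = fint M f (map (eval M \<rho>) ts)"

fun sat :: "('u, 'f, 'p) struc \<Rightarrow> (nat \<Rightarrow> 'u) \<Rightarrow> ('f, 'p) fm \<Rightarrow> bool" where
  "sat M \<rho> Top = True"
| "sat M \<rho> Bot = False"
| "sat M \<rho> (Atom P ts) = pint M P (map (eval M \<rho>) ts)"
| "sat M \<rho> (Conj \<phi> \<psi>) = (sat M \<rho> \<phi> \<and> sat M \<rho> \<psi>)"
| "sat M \<rho> (Disj \<phi> \<psi>) = (sat M \<rho> \<phi> \<or> sat M \<rho> \<psi>)"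
| "sat M \<rho> (BAll x t \<phi>) =
     (\<forall>d\<in>dom M. pint M PIn [d, eval M \<rho> t] \<longrightarrow> sat M (\<rho>(x := d)) \<phi>)"
| "sat M \<rho> (Ex x \<phi>) = (\<exists>d\<in>dom M. sat M (\<rho>(x := d)) \<phi>)"

definition assignment :: "('u, 'f, 'p) struc \<Rightarrow> (nat \<Rightarrow> 'u) \<Rightarrow> bool" where
  "assignment M \<rho> = (\<forall>x. \<rho> x \<in> dom M)"

definition models_cond :: "('u, 'f, 'p) struc \<Rightarrow> ('f, 'p) cond \<Rightarrow> bool" where
  "models_cond M c = (\<forall>\<rho>. assignment M \<rho> \<longrightarrow> sat M \<rho> (fst c) \<longrightarrow> sat M \<rho> (snd c))"

end

theory Submission
  imports Defs "HOL-Library.Infinite_Set"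
begin

text \<open>Henkin-style completeness. Suppose \<open>\<chi> \<Rightarrow> \<chi>'\<close> is not derivable. Enumerating all
  formulas, grow a pair of lists \<open>(\<Gamma>, \<Delta>)\<close>, starting from \<open>([\<chi>], [\<chi>'])\<close>, such that
  \<open>\<And>\<Gamma> \<Rightarrow> \<Or>\<Delta>\<close> stays underivable: each formula goes to the left if that keeps the pair
  consistent and to the right otherwise, which is possible by the cut rule obtained from the
  distributivity axiom (L9). An existential formula put on the left is accompanied by an instance at
  a fresh variable, and a bounded universal formula \<open>\<forall>x\<in>s. \<psi>\<close> put on the right by
  \<open>y \<in> s\<close> on the left and \<open>\<psi>(y)\<close> on the right; (L12), (L14), (L15) and renaming of bound
  variables make these steps safe. The left side Pos of the limit is closed under derivability and
  prime, Pos-equality is a congruence by (L20)-(L23), and every term is Pos-equal to a variable by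
  (L10). The classes of variables form a countable structure, embedded into the infinite type
  \<open>'u\<close>, in which, under the canonical assignment, exactly the formulas of Pos hold. As Pos is
  closed under instances of axioms, this structure models T, while \<open>\<chi> \<in> Pos\<close> and
  \<open>\<chi>' \<notin> Pos\<close>.\<close>

instance psym :: (countable) countable by countable_datatype
instance trm :: (countable) countable by countable_datatype
instance fm :: (countable, countable) countable by countable_datatype

section \<open>Variables and substitution\<close>

fun vars :: "('f, 'p) fm \<Rightarrow> nat set" where
  "vars Top = {}"
| "vars Bot = {}"
| "vars (Atom P ts) = (\<Union>t\<in>set ts. fv_trm t)"
| "vars (Conj \<phi> \<psi>) = vars \<phi> \<union> vars \<psi>"
| "vars (Disj \<phi> \<psi>) = vars \<phi> \<union> vars \<psi>"
| "vars (BAll x t \<phi>) = insert x (fv_trm t \<union> vars \<phi>)"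
| "vars (Ex x \<phi>) = insert x (vars \<phi>)"

fun size_fm :: "('f, 'p) fm \<Rightarrow> nat" where
  "size_fm (Conj \<phi> \<psi>) = Suc (size_fm \<phi> + size_fm \<psi>)"
| "size_fm (Disj \<phi> \<psi>) = Suc (size_fm \<phi> + size_fm \<psi>)"
| "size_fm (BAll x t \<phi>) = Suc (size_fm \<phi>)"
| "size_fm (Ex x \<phi>) = Suc (size_fm \<phi>)"
| "size_fm _ = 1"

lemma finite_fv_trm [simp]: "finite (fv_trm t)"
  by (induction t) auto

lemma finite_vars [simp]: "finite (vars \<phi>)"
  by (induction \<phi>) auto

lemma fv_subset_vars: "fv \<phi> \<subseteq> vars \<phi>"
  by (induction \<phi>) auto

lemma tsubst_cong: "(\<forall>v\<in>fv_trm t. \<sigma> v = \<sigma>' v) \<Longrightarrow> tsubst \<sigma> t = tsubst \<sigma>' t"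
  by (induction t) auto

lemma tsubst_Var [simp]: "tsubst Var t = t"
  by (induction t) (auto simp: map_idI)

lemma tsubst_fresh: "a \<notin> fv_trm t \<Longrightarrow> tsubst (Var(a := u)) t = t"
  using tsubst_cong[of t "Var(a := u)" Var] by auto

lemma tsubst_tsubst: "tsubst \<sigma>' (tsubst \<sigma> t) = tsubst (\<lambda>v. tsubst \<sigma>' (\<sigma> v)) t"
  by (induction t) auto

lemma fv_tsubst: "fv_trm (tsubst \<sigma> t) = (\<Union>v\<in>fv_trm t. fv_trm (\<sigma> v))"
  by (induction t) auto

lemma wf_tsubst: "wf_trm arF t \<Longrightarrow> (\<And>v. wf_trm arF (\<sigma> v)) \<Longrightarrow> wf_trm arF (tsubst \<sigma> t)"
  by (induction t) auto

lemma eval_tsubst: "eval M \<rho> (tsubst \<sigma> t) = eval M (\<lambda>v. eval M \<rho> (\<sigma> v)) t"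
  by (induction t) (auto simp: comp_def cong: map_cong)

lemma eval_cong: "(\<forall>v\<in>fv_trm t. \<rho> v = \<rho>' v) \<Longrightarrow> eval M \<rho> t = eval M \<rho>' t"
  by (induction t) (auto cong: map_cong)

lemma subst_cong: "(\<forall>v\<in>fv \<phi>. \<sigma> v = \<sigma>' v) \<Longrightarrow> subst \<sigma> \<phi> = subst \<sigma>' \<phi>"
proof (induction \<phi> arbitrary: \<sigma> \<sigma>')
  case (Atom P ts) then show ?case by (auto intro!: tsubst_cong)
next
  case (BAll x t \<phi>) then show ?case by (auto intro!: tsubst_cong)
qed auto

lemma subst_Var [simp]: "subst Var \<phi> = \<phi>"
  by (induction \<phi>) (auto simp: map_idI)

lemma fv_subst: "fv (subst \<sigma> \<phi>) \<subseteq> (\<Union>v\<in>fv \<phi>. fv_trm (\<sigma> v))"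
proof (induction \<phi> arbitrary: \<sigma>)
  case (BAll x t \<phi>)
  then show ?case by (fastforce simp: fv_tsubst split: if_split_asm)
next
  case (Ex x \<phi>)
  then show ?case by (fastforce split: if_split_asm)
qed (simp add: fv_tsubst; blast)+

lemma size_fm_subst [simp]: "size_fm (subst \<sigma> \<phi>) = size_fm \<phi>"
  by (induction \<phi> arbitrary: \<sigma>) auto

lemma wf_subst: "wf_fm arF arP \<phi> \<Longrightarrow> (\<And>v. wf_trm arF (\<sigma> v)) \<Longrightarrow> wf_fm arF arP (subst \<sigma> \<phi>)"
  by (induction \<phi> arbitrary: \<sigma>) (auto simp: wf_tsubst)

lemma substok_avoiding:
  "(\<And>u. u \<in> fv \<phi> \<Longrightarrow> \<sigma> u = Var u \<or> fv_trm (\<sigma> u) \<inter> vars \<phi> = {}) \<Longrightarrow> substok \<sigma> \<phi>"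
proof (induction \<phi> arbitrary: \<sigma>)
  case (BAll x t \<phi>)
  have "substok (\<sigma>(x := Var x)) \<phi>"
    by (rule BAll.IH) (use BAll.prems in auto)
  moreover have "x \<notin> fv_trm (\<sigma> v)" if "v \<in> fv \<phi> - {x}" for v
    using BAll.prems[of v] that by fastforce
  ultimately show ?case by simp
next
  case (Ex x \<phi>)
  have "substok (\<sigma>(x := Var x)) \<phi>"
    by (rule Ex.IH) (use Ex.prems in auto)
  moreover have "x \<notin> fv_trm (\<sigma> v)" if "v \<in> fv \<phi> - {x}" for v
    using Ex.prems[of v] that by fastforce
  ultimately show ?case by simp
qed auto

lemma substok_Var: "(\<And>u. u \<in> fv \<phi> \<Longrightarrow> \<sigma> u = Var u) \<Longrightarrow> substok \<sigma> \<phi>"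
  by (rule substok_avoiding) auto

lemma subst_subst:
  "substok \<sigma>1 \<phi> \<Longrightarrow> subst \<sigma>2 (subst \<sigma>1 \<phi>) = subst (\<lambda>v. tsubst \<sigma>2 (\<sigma>1 v)) \<phi>"
proof (induction \<phi> arbitrary: \<sigma>1 \<sigma>2)
  case (Atom P ts) then show ?case by (auto simp: tsubst_tsubst)
next
  case (BAll x t \<phi>)
  have "subst (\<sigma>2(x := Var x)) (subst (\<sigma>1(x := Var x)) \<phi>)
      = subst (\<lambda>v. tsubst (\<sigma>2(x := Var x)) ((\<sigma>1(x := Var x)) v)) \<phi>"
    by (rule BAll.IH) (use BAll.prems in \<open>simp only: substok.simps\<close>)
  also have "\<dots> = subst ((\<lambda>v. tsubst \<sigma>2 (\<sigma>1 v))(x := Var x)) \<phi>"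
    using BAll.prems by (intro subst_cong) (auto intro!: tsubst_cong)
  finally show ?case by (simp add: tsubst_tsubst)
next
  case (Ex x \<phi>)
  have "subst (\<sigma>2(x := Var x)) (subst (\<sigma>1(x := Var x)) \<phi>)
      = subst (\<lambda>v. tsubst (\<sigma>2(x := Var x)) ((\<sigma>1(x := Var x)) v)) \<phi>"
    by (rule Ex.IH) (use Ex.prems in \<open>simp only: substok.simps\<close>)
  also have "\<dots> = subst ((\<lambda>v. tsubst \<sigma>2 (\<sigma>1 v))(x := Var x)) \<phi>"
    using Ex.prems by (intro subst_cong) (auto intro!: tsubst_cong)
  finally show ?case by simp
qed auto

lemma sat_cong: "(\<forall>v\<in>fv \<phi>. \<rho> v = \<rho>' v) \<Longrightarrow> sat M \<rho> \<phi> = sat M \<rho>' \<phi>"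
proof (induction \<phi> arbitrary: \<rho> \<rho>')
  case (Atom P ts)
  then have "map (eval M \<rho>) ts = map (eval M \<rho>') ts" by (auto intro!: eval_cong)
  then show ?case by (metis sat.simps(3))
next
  case (BAll x t \<phi>)
  then have "eval M \<rho> t = eval M \<rho>' t" by (auto intro!: eval_cong)
  moreover have "sat M (\<rho>(x := d)) \<phi> = sat M (\<rho>'(x := d)) \<phi>" for d
    by (rule BAll.IH) (use BAll.prems in auto)
  ultimately show ?case by simp
next
  case (Ex x \<phi>)
  have "sat M (\<rho>(x := d)) \<phi> = sat M (\<rho>'(x := d)) \<phi>" for d
    by (rule Ex.IH) (use Ex.prems in auto)
  then show ?case by simp
qed (simp; metis UnCI)+

lemma sat_subst:
  "substok \<sigma> \<phi> \<Longrightarrow> sat M \<rho> (subst \<sigma> \<phi>) = sat M (\<lambda>v. eval M \<rho> (\<sigma> v)) \<phi>"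
proof (induction \<phi> arbitrary: \<sigma> \<rho>)
  case (Atom P ts) then show ?case by (simp add: eval_tsubst comp_def)
next
  case (BAll x t \<phi>)
  have "sat M (\<rho>(x := d)) (subst (\<sigma>(x := Var x)) \<phi>)
      = sat M ((\<lambda>v. eval M \<rho> (\<sigma> v))(x := d)) \<phi>" for d
  proof -
    have "sat M (\<rho>(x := d)) (subst (\<sigma>(x := Var x)) \<phi>)
        = sat M (\<lambda>v. eval M (\<rho>(x := d)) ((\<sigma>(x := Var x)) v)) \<phi>"
      by (rule BAll.IH) (use BAll.prems in \<open>simp only: substok.simps\<close>)
    also have "\<dots> = sat M ((\<lambda>v. eval M \<rho> (\<sigma> v))(x := d)) \<phi>"
      using BAll.prems by (intro sat_cong) (auto intro!: eval_cong)
    finally show ?thesis .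
  qed
  then show ?case by (simp add: eval_tsubst)
next
  case (Ex x \<phi>)
  have "sat M (\<rho>(x := d)) (subst (\<sigma>(x := Var x)) \<phi>)
      = sat M ((\<lambda>v. eval M \<rho> (\<sigma> v))(x := d)) \<phi>" for d
  proof -
    have "sat M (\<rho>(x := d)) (subst (\<sigma>(x := Var x)) \<phi>)
        = sat M (\<lambda>v. eval M (\<rho>(x := d)) ((\<sigma>(x := Var x)) v)) \<phi>"
      by (rule Ex.IH) (use Ex.prems in \<open>simp only: substok.simps\<close>)
    also have "\<dots> = sat M ((\<lambda>v. eval M \<rho> (\<sigma> v))(x := d)) \<phi>"
      using Ex.prems by (intro sat_cong) (auto intro!: eval_cong)
    finally show ?thesis .
  qed
  then show ?case by simp
qed auto

lemma substok_rename_back: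
  "y \<notin> vars \<phi> \<Longrightarrow> substok (Var(y := Var x)) (subst (Var(x := Var y)) \<phi>)"
proof (induction \<phi>)
  case (BAll z t \<phi>)
  show ?case
  proof (cases "z = x")
    case True
    have y: "y \<notin> fv \<phi>" using BAll.prems fv_subset_vars[of \<phi>] by auto
    have id: "(Var(x := Var y))(z := Var z) = Var" using True by auto
    have "substok ((Var(y := Var x))(z := Var z)) \<phi>" using y by (intro substok_Var) auto
    moreover have "z \<notin> fv_trm ((Var(y := Var x)) v)" if "v \<in> fv \<phi> - {z}" for v
      using that y by (cases "v = y") auto
    ultimately show ?thesis by (simp only: subst.simps substok.simps id subst_Var) blast
  next
    case False
    have upd: "(Var(x := Var y))(z := Var z) = Var(x := Var y)"
      "(Var(y := Var x))(z := Var z) = Var(y := Var x)" using BAll.prems False by auto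
    have "substok (Var(y := Var x)) (subst (Var(x := Var y)) \<phi>)" using BAll by (simp add: fun_upd_def)
    moreover have "z \<notin> fv_trm ((Var(y := Var x)) v)" if "v \<noteq> z" for v
      using that False by (cases "v = y") auto
    ultimately show ?thesis by (simp only: subst.simps substok.simps upd) blast
  qed
next
  case (Ex z \<phi>)
  show ?case
  proof (cases "z = x")
    case True
    have y: "y \<notin> fv \<phi>" using Ex.prems fv_subset_vars[of \<phi>] by auto
    have id: "(Var(x := Var y))(z := Var z) = Var" using True by auto
    have "substok ((Var(y := Var x))(z := Var z)) \<phi>" using y by (intro substok_Var) auto
    moreover have "z \<notin> fv_trm ((Var(y := Var x)) v)" if "v \<in> fv \<phi> - {z}" for v
      using that y by (cases "v = y") auto
    ultimately show ?thesis by (simp only: subst.simps substok.simps id subst_Var) blast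
  next
    case False
    have upd: "(Var(x := Var y))(z := Var z) = Var(x := Var y)"
      "(Var(y := Var x))(z := Var z) = Var(y := Var x)" using Ex.prems False by auto
    have "substok (Var(y := Var x)) (subst (Var(x := Var y)) \<phi>)" using Ex by (simp add: fun_upd_def)
    moreover have "z \<notin> fv_trm ((Var(y := Var x)) v)" if "v \<noteq> z" for v
      using that False by (cases "v = y") auto
    ultimately show ?thesis by (simp only: subst.simps substok.simps upd) blast
  qed
qed auto

lemma substok1_rename_back: "y \<notin> vars \<phi> \<Longrightarrow> substok1 (subst1 \<phi> x (Var y)) y (Var x)"
  unfolding substok1_def subst1_def by (rule substok_rename_back)

lemma substok1_fresh_Var: "y \<notin> vars \<phi> \<Longrightarrow> substok1 \<phi> x (Var y)"
  unfolding substok1_def by (rule substok_avoiding) auto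

lemma subst1_rename_back:
  assumes "y \<notin> vars \<phi>"
  shows "subst1 (subst1 \<phi> x (Var y)) y (Var x) = \<phi>"
proof -
  have "subst1 (subst1 \<phi> x (Var y)) y (Var x)
       = subst (\<lambda>v. tsubst (Var(y := Var x)) ((Var(x := Var y)) v)) \<phi>"
    using substok1_fresh_Var[OF assms(1), of x] unfolding subst1_def substok1_def by (rule subst_subst)
  also have "\<dots> = subst Var \<phi>"
  proof (rule subst_cong, rule ballI)
    fix v assume "v \<in> fv \<phi>"
    then have "v \<noteq> y" using assms fv_subset_vars[of \<phi>] by blast
    then show "tsubst (Var(y := Var x)) ((Var(x := Var y)) v) = Var v"
      by (cases "v = x") auto
  qed
  finally show ?thesis by simp
qed

lemma fv_subst1_Var:
  fixes \<phi> :: "('f, 'p) fm"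
  shows "fv (subst1 \<phi> x (Var y)) \<subseteq> (fv \<phi> - {x}) \<union> {y}"
proof
  fix u assume u: "u \<in> fv (subst1 \<phi> x (Var y))"
  have "fv (subst1 \<phi> x (Var y)) \<subseteq> (\<Union>v\<in>fv \<phi>. fv_trm ((Var(x := Var y) :: nat \<Rightarrow> 'f trm) v))"
    unfolding subst1_def by (rule fv_subst)
  with u obtain v where "v \<in> fv \<phi>" "u \<in> fv_trm ((Var(x := Var y) :: nat \<Rightarrow> 'f trm) v)" by auto
  then show "u \<in> (fv \<phi> - {x}) \<union> {y}" by (cases "v = x") auto
qed


lemma subst1_BAll_bound:
  assumes "a \<notin> fv_trm s" "a \<notin> fv \<psi>"
  shows "subst1 (BAll z (tsubst (Var(x := Var a)) s) \<psi>) a t = BAll z (tsubst (Var(x := t)) s) \<psi>"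
proof -
  have "tsubst (Var(a := t)) (tsubst (Var(x := Var a)) s) = tsubst (Var(x := t)) s"
    unfolding tsubst_tsubst using assms(1) by (intro tsubst_cong) auto
  moreover have "subst ((Var(a := t))(z := Var z)) \<psi> = subst Var \<psi>"
    using assms(2) by (intro subst_cong) auto
  ultimately show ?thesis unfolding subst1_def by simp
qed

lemma substok1_BAll_bound:
  assumes "a \<notin> fv \<psi>"
  shows "substok1 (BAll z s0 \<psi>) a t"
proof -
  have "substok ((Var(a := t))(z := Var z)) \<psi>" using assms by (intro substok_Var) auto
  moreover have "\<forall>v\<in>fv \<psi> - {z}. z \<notin> fv_trm ((Var(a := t)) v)" using assms by auto
  ultimately show ?thesis unfolding substok1_def by simp
qed

fun conjs :: "('f, 'p) fm list \<Rightarrow> ('f, 'p) fm" where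
  "conjs [] = Top" | "conjs (g # G) = Conj g (conjs G)"

fun disjs :: "('f, 'p) fm list \<Rightarrow> ('f, 'p) fm" where
  "disjs [] = Bot" | "disjs (g # G) = Disj g (disjs G)"

lemma fv_conjs: "fv (conjs G) = (\<Union>g\<in>set G. fv g)"
  by (induction G) auto

lemma fv_disjs: "fv (disjs G) = (\<Union>g\<in>set G. fv g)"
  by (induction G) auto

section \<open>Derivations\<close>

lemma fin_pos_proof_snoc:
  assumes "fin_pos_proof arF arP Ax cs \<chi> \<chi>'" "ax \<in> Ax" "application ax \<chi>' \<chi>''"
    "wf_fm arF arP \<chi>''"
  shows "fin_pos_proof arF arP Ax (cs @ [\<chi>'']) \<chi> \<chi>''"
  unfolding fin_pos_proof_def
proof (intro conjI allI impI)
  have cs: "cs \<noteq> []" "hd cs = \<chi>" "last cs = \<chi>'" "\<forall>c\<in>set cs. wf_fm arF arP c"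
    and steps: "\<And>i. Suc i < length cs \<Longrightarrow> \<exists>ax\<in>Ax. application ax (cs ! i) (cs ! Suc i)"
    using assms(1) unfolding fin_pos_proof_def by auto
  then show "cs @ [\<chi>''] \<noteq> []" "hd (cs @ [\<chi>'']) = \<chi>" "last (cs @ [\<chi>'']) = \<chi>''"
    "\<forall>c\<in>set (cs @ [\<chi>'']). wf_fm arF arP c"
    using assms(4) by auto
  fix i assume i: "Suc i < length (cs @ [\<chi>''])"
  show "\<exists>ax\<in>Ax. application ax ((cs @ [\<chi>'']) ! i) ((cs @ [\<chi>'']) ! Suc i)"
  proof (cases "Suc i < length cs")
    case True
    then show ?thesis using steps by (auto simp: nth_append)
  next
    case False
    then have "Suc i = length cs" using i by simp
    moreover from this have "cs ! i = \<chi>'" using cs by (metis diff_Suc_1 last_conv_nth)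
    ultimately show ?thesis using assms(2,3) by (auto simp: nth_append)
  qed
qed

locale calculus =
  fixes arF :: "'f \<Rightarrow> nat" and arP :: "'p \<Rightarrow> nat" and Ax :: "('f, 'p) cond set"
  assumes logical_axioms_subset: "logical_axioms \<subseteq> Ax"
begin

abbreviation wff :: "('f, 'p) fm \<Rightarrow> bool" where
  "wff \<equiv> wf_fm arF arP"

inductive derives :: "('f, 'p) fm \<Rightarrow> ('f, 'p) fm \<Rightarrow> bool" where
  derives_refl: "wff \<phi> \<Longrightarrow> derives \<phi> \<phi>"
| derives_step: "derives \<phi> \<psi> \<Longrightarrow> ax \<in> Ax \<Longrightarrow> application ax \<psi> \<chi> \<Longrightarrow> wff \<chi> \<Longrightarrow> derives \<phi> \<chi>"

lemma derives_wf: "derives \<phi> \<psi> \<Longrightarrow> wff \<phi> \<and> wff \<psi>"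
  by (induction rule: derives.induct) auto

lemma derives_provable: "derives \<phi> \<psi> \<Longrightarrow> provable arF arP Ax (\<phi>, \<psi>)"
proof (induction rule: derives.induct)
  case (derives_refl \<phi>)
  then have "fin_pos_proof arF arP Ax [\<phi>] \<phi> \<phi>"
    unfolding fin_pos_proof_def by auto
  then show ?case unfolding provable_def by auto
next
  case (derives_step \<phi> \<psi> ax \<chi>)
  then show ?case unfolding provable_def by (auto intro: fin_pos_proof_snoc)
qed

lemma derives_trans [trans]:
  assumes "derives \<phi> \<psi>" "derives \<psi> \<chi>"
  shows "derives \<phi> \<chi>"
  using assms(2,1) by (induction rule: derives.induct) (auto intro: derives_step)

lemma derives_context:
  assumes "derives \<phi> \<psi>"
    and "\<And>ax \<alpha> \<beta>. application ax \<alpha> \<beta> \<Longrightarrow> application ax (K \<alpha>) (K \<beta>)"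
    and "\<And>\<alpha>. wff \<alpha> \<Longrightarrow> wff (K \<alpha>)"
  shows "derives (K \<phi>) (K \<psi>)"
  using assms(1) by (induction rule: derives.induct) (auto intro: derives.intros assms(2,3))

lemma derives_Conj_cong1: "derives \<phi> \<psi> \<Longrightarrow> wff \<chi> \<Longrightarrow> derives (Conj \<phi> \<chi>) (Conj \<psi> \<chi>)"
  by (rule derives_context[where K = "\<lambda>\<alpha>. Conj \<alpha> \<chi>"])
    (auto simp: application_def intro: replace_one.intros)

lemma derives_Conj_cong2: "derives \<phi> \<psi> \<Longrightarrow> wff \<chi> \<Longrightarrow> derives (Conj \<chi> \<phi>) (Conj \<chi> \<psi>)"
  by (rule derives_context[where K = "\<lambda>\<alpha>. Conj \<chi> \<alpha>"])
    (auto simp: application_def intro: replace_one.intros)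

lemma derives_Disj_cong1: "derives \<phi> \<psi> \<Longrightarrow> wff \<chi> \<Longrightarrow> derives (Disj \<phi> \<chi>) (Disj \<psi> \<chi>)"
  by (rule derives_context[where K = "\<lambda>\<alpha>. Disj \<alpha> \<chi>"])
    (auto simp: application_def intro: replace_one.intros)

lemma derives_Disj_cong2: "derives \<phi> \<psi> \<Longrightarrow> wff \<chi> \<Longrightarrow> derives (Disj \<chi> \<phi>) (Disj \<chi> \<psi>)"
  by (rule derives_context[where K = "\<lambda>\<alpha>. Disj \<chi> \<alpha>"])
    (auto simp: application_def intro: replace_one.intros)

lemma derives_BAll_cong: "derives \<phi> \<psi> \<Longrightarrow> wf_trm arF t \<Longrightarrow> derives (BAll x t \<phi>) (BAll x t \<psi>)"
  by (rule derives_context[where K = "BAll x t"])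
    (auto simp: application_def intro: replace_one.intros)

lemma derives_Ex_cong: "derives \<phi> \<psi> \<Longrightarrow> derives (Ex x \<phi>) (Ex x \<psi>)"
  by (rule derives_context[where K = "Ex x"])
    (auto simp: application_def intro: replace_one.intros)

lemma derives_instance:
  assumes "ax \<in> Ax" "substok \<sigma> (fst ax)" "substok \<sigma> (snd ax)"
    "wff (subst \<sigma> (fst ax))" "wff (subst \<sigma> (snd ax))"
  shows "derives (subst \<sigma> (fst ax)) (subst \<sigma> (snd ax))"
proof (rule derives_step[OF derives_refl])
  show "application ax (subst \<sigma> (fst ax)) (subst \<sigma> (snd ax))"
    unfolding application_def using assms replace_one.here by blast
qed (use assms in auto)

lemma derives_logical: "(\<phi>, \<psi>) \<in> logical_axioms \<Longrightarrow> wff \<phi> \<Longrightarrow> wff \<psi> \<Longrightarrow> derives \<phi> \<psi>"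
  using derives_instance[of "(\<phi>, \<psi>)" Var] logical_axioms_subset by (auto intro: substok_Var)

lemma derives_Top: "wff \<phi> \<Longrightarrow> derives \<phi> Top"
  by (rule derives_logical[OF logical_axioms.L1]) auto

lemma Bot_derives: "wff \<phi> \<Longrightarrow> derives Bot \<phi>"
  by (rule derives_logical[OF logical_axioms.L2]) auto

lemma derives_conjunct1: "wff \<phi> \<Longrightarrow> wff \<psi> \<Longrightarrow> derives (Conj \<phi> \<psi>) \<phi>"
  by (rule derives_logical[OF logical_axioms.L3]) auto

lemma derives_conjunct2: "wff \<phi> \<Longrightarrow> wff \<psi> \<Longrightarrow> derives (Conj \<phi> \<psi>) \<psi>"
  by (rule derives_logical[OF logical_axioms.L4]) auto

lemma derives_disjI1: "wff \<phi> \<Longrightarrow> wff \<psi> \<Longrightarrow> derives \<phi> (Disj \<phi> \<psi>)"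
  by (rule derives_logical[OF logical_axioms.L6]) auto

lemma derives_disjI2: "wff \<phi> \<Longrightarrow> wff \<psi> \<Longrightarrow> derives \<psi> (Disj \<phi> \<psi>)"
  by (rule derives_logical[OF logical_axioms.L7]) auto

lemma derives_conjI:
  assumes "derives \<phi> \<psi>" "derives \<phi> \<chi>"
  shows "derives \<phi> (Conj \<psi> \<chi>)"
proof -
  have wf: "wff \<phi>" "wff \<psi>" "wff \<chi>" using derives_wf[OF assms(1)] derives_wf[OF assms(2)] by auto
  have "derives \<phi> (Conj \<phi> \<phi>)" by (rule derives_logical[OF logical_axioms.L5]) (use wf in auto)
  also have "derives (Conj \<phi> \<phi>) (Conj \<psi> \<phi>)" using assms(1) wf(1) by (rule derives_Conj_cong1)
  also have "derives (Conj \<psi> \<phi>) (Conj \<psi> \<chi>)" using assms(2) wf(2) by (rule derives_Conj_cong2)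
  finally show ?thesis .
qed

lemma derives_disjE:
  assumes "derives \<phi> \<chi>" "derives \<psi> \<chi>"
  shows "derives (Disj \<phi> \<psi>) \<chi>"
proof -
  have wf: "wff \<phi>" "wff \<psi>" "wff \<chi>" using derives_wf[OF assms(1)] derives_wf[OF assms(2)] by auto
  have "derives (Disj \<phi> \<psi>) (Disj \<chi> \<psi>)" using assms(1) wf(2) by (rule derives_Disj_cong1)
  also have "derives (Disj \<chi> \<psi>) (Disj \<chi> \<chi>)" using assms(2) wf(3) by (rule derives_Disj_cong2)
  also have "derives (Disj \<chi> \<chi>) \<chi>" by (rule derives_logical[OF logical_axioms.L8]) (use wf in auto)
  finally show ?thesis .
qed

lemma derives_conj_commute: "wff \<phi> \<Longrightarrow> wff \<psi> \<Longrightarrow> derives (Conj \<phi> \<psi>) (Conj \<psi> \<phi>)"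
  by (intro derives_conjI derives_conjunct1 derives_conjunct2)

lemma derives_disj_commute: "wff \<phi> \<Longrightarrow> wff \<psi> \<Longrightarrow> derives (Disj \<phi> \<psi>) (Disj \<psi> \<phi>)"
  by (intro derives_disjE derives_disjI1 derives_disjI2)

lemma derives_cut:
  assumes "derives (Conj \<phi> \<alpha>) \<beta>" "derives \<alpha> (Disj \<phi> \<beta>)"
  shows "derives \<alpha> \<beta>"
proof -
  have wf: "wff \<phi>" "wff \<alpha>" "wff \<beta>" using derives_wf[OF assms(1)] derives_wf[OF assms(2)] by auto
  have "derives \<alpha> (Conj (Disj \<phi> \<beta>) \<alpha>)" using assms(2) wf by (intro derives_conjI derives_refl)
  also have "derives (Conj (Disj \<phi> \<beta>) \<alpha>) (Disj (Conj \<phi> \<alpha>) (Conj \<beta> \<alpha>))"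
    by (rule derives_logical[OF logical_axioms.L9]) (use wf in auto)
  also have "derives (Disj (Conj \<phi> \<alpha>) (Conj \<beta> \<alpha>)) \<beta>"
    using assms(1) wf by (intro derives_disjE derives_conjunct1)
  finally show ?thesis .
qed

lemma wff_conjs [simp]: "wff (conjs \<Gamma>) \<longleftrightarrow> (\<forall>\<phi>\<in>set \<Gamma>. wff \<phi>)"
  by (induction \<Gamma>) auto

lemma wff_disjs [simp]: "wff (disjs \<Delta>) \<longleftrightarrow> (\<forall>\<phi>\<in>set \<Delta>. wff \<phi>)"
  by (induction \<Delta>) auto

lemma conjs_derives_member: "\<forall>\<psi>\<in>set \<Gamma>. wff \<psi> \<Longrightarrow> \<phi> \<in> set \<Gamma> \<Longrightarrow> derives (conjs \<Gamma>) \<phi>"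
proof (induction \<Gamma>)
  case (Cons \<psi> \<Gamma>)
  then have wf: "wff \<psi>" "wff (conjs \<Gamma>)" by auto
  show ?case
  proof (cases "\<phi> = \<psi>")
    case True
    then show ?thesis using wf by (simp add: derives_conjunct1)
  next
    case False
    then have "derives (conjs \<Gamma>) \<phi>" using Cons by auto
    then show ?thesis by (simp add: derives_trans[OF derives_conjunct2[OF wf]])
  qed
qed simp

lemma derives_disjs_member: "\<forall>\<psi>\<in>set \<Delta>. wff \<psi> \<Longrightarrow> \<phi> \<in> set \<Delta> \<Longrightarrow> derives \<phi> (disjs \<Delta>)"
proof (induction \<Delta>)
  case (Cons \<psi> \<Delta>)
  then have wf: "wff \<psi>" "wff (disjs \<Delta>)" by auto
  show ?case
  proof (cases "\<phi> = \<psi>")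
    case True
    then show ?thesis using wf by (simp add: derives_disjI1)
  next
    case False
    then have "derives \<phi> (disjs \<Delta>)" using Cons by auto
    then show ?thesis by (simp add: derives_trans[OF _ derives_disjI2[OF wf]])
  qed
qed simp

lemma derives_conjsI: "wff \<phi> \<Longrightarrow> \<forall>\<psi>\<in>set \<Gamma>. derives \<phi> \<psi> \<Longrightarrow> derives \<phi> (conjs \<Gamma>)"
  by (induction \<Gamma>) (auto intro: derives_Top derives_conjI)

lemma disjs_derivesI: "wff \<psi> \<Longrightarrow> \<forall>\<phi>\<in>set \<Delta>. derives \<phi> \<psi> \<Longrightarrow> derives (disjs \<Delta>) \<psi>"
  by (induction \<Delta>) (auto intro: Bot_derives derives_disjE)

lemma conjs_derives_subset:
  "set \<Gamma> \<subseteq> set \<Gamma>' \<Longrightarrow> \<forall>\<phi>\<in>set \<Gamma>'. wff \<phi> \<Longrightarrow> derives (conjs \<Gamma>') (conjs \<Gamma>)"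
  by (intro derives_conjsI) (auto intro: conjs_derives_member)

lemma disjs_derives_subset:
  "set \<Delta> \<subseteq> set \<Delta>' \<Longrightarrow> \<forall>\<phi>\<in>set \<Delta>'. wff \<phi> \<Longrightarrow> derives (disjs \<Delta>) (disjs \<Delta>')"
  by (intro disjs_derivesI) (auto intro: derives_disjs_member)

lemma wff_subst1: "wff \<phi> \<Longrightarrow> wf_trm arF t \<Longrightarrow> wff (subst1 \<phi> x t)"
  unfolding subst1_def by (rule wf_subst) auto

lemma derives_ExI:
  "substok1 \<phi> x t \<Longrightarrow> wff \<phi> \<Longrightarrow> wf_trm arF t \<Longrightarrow> derives (subst1 \<phi> x t) (Ex x \<phi>)"
  by (rule derives_logical[OF logical_axioms.L10]) (auto simp: wff_subst1)

lemma derives_Ex_vacuous: "y \<notin> fv \<phi> \<Longrightarrow> wff \<phi> \<Longrightarrow> derives (Ex y \<phi>) \<phi>"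
  by (rule derives_logical[OF logical_axioms.L11]) auto

lemma derives_Conj_Ex:
  "y \<notin> fv \<chi> \<Longrightarrow> wff \<chi> \<Longrightarrow> wff \<phi> \<Longrightarrow> derives (Conj \<chi> (Ex y \<phi>)) (Ex y (Conj \<chi> \<phi>))"
  by (rule derives_logical[OF logical_axioms.L12]) auto

lemma derives_BAllE:
  "substok1 \<phi> x t \<Longrightarrow> wff \<phi> \<Longrightarrow> wf_trm arF t \<Longrightarrow> wf_trm arF s \<Longrightarrow>
    derives (Conj (In t s) (BAll x s \<phi>)) (subst1 \<phi> x t)"
  by (rule derives_logical[OF logical_axioms.L13]) (auto simp: wff_subst1)

lemma derives_BAll_vacuous:
  "y \<notin> fv \<phi> \<Longrightarrow> y \<notin> fv_trm s \<Longrightarrow> wff \<phi> \<Longrightarrow> wf_trm arF s \<Longrightarrow>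
    derives \<phi> (BAll y s (Conj \<phi> (In (Var y) s)))"
  by (rule derives_logical[OF logical_axioms.L14]) auto

lemma derives_BAll_Disj:
  "y \<notin> fv \<chi> \<Longrightarrow> wff \<chi> \<Longrightarrow> wff \<phi> \<Longrightarrow> wf_trm arF s \<Longrightarrow>
    derives (BAll y s (Disj \<chi> \<phi>)) (Disj \<chi> (BAll y s \<phi>))"
  by (rule derives_logical[OF logical_axioms.L15]) auto

lemma derives_In_or_Nin: "wf_trm arF s \<Longrightarrow> wf_trm arF t \<Longrightarrow> derives Top (Disj (In s t) (Nin s t))"
  by (rule derives_logical[OF logical_axioms.L16]) auto

lemma derives_In_Nin_Bot: "wf_trm arF s \<Longrightarrow> wf_trm arF t \<Longrightarrow> derives (Conj (In s t) (Nin s t)) Bot"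
  by (rule derives_logical[OF logical_axioms.L17]) auto

lemma derives_Eq_or_Neq: "wf_trm arF s \<Longrightarrow> wf_trm arF t \<Longrightarrow> derives Top (Disj (Eq s t) (Neq s t))"
  by (rule derives_logical[OF logical_axioms.L18]) auto

lemma derives_Eq_Neq_Bot: "wf_trm arF s \<Longrightarrow> wf_trm arF t \<Longrightarrow> derives (Conj (Eq s t) (Neq s t)) Bot"
  by (rule derives_logical[OF logical_axioms.L19]) auto

lemma derives_Eq_refl: "wf_trm arF t \<Longrightarrow> derives Top (Eq t t)"
  by (rule derives_logical[OF logical_axioms.L20]) auto

lemma derives_Eq_sym: "wf_trm arF s \<Longrightarrow> wf_trm arF t \<Longrightarrow> derives (Eq s t) (Eq t s)"
  by (rule derives_logical[OF logical_axioms.L21]) auto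

lemma derives_Eq_trans:
  "wf_trm arF r \<Longrightarrow> wf_trm arF s \<Longrightarrow> wf_trm arF t \<Longrightarrow> derives (Conj (Eq r s) (Eq s t)) (Eq r t)"
  by (rule derives_logical[OF logical_axioms.L22]) auto

lemma derives_Eq_subst:
  "substok1 \<phi> a s \<Longrightarrow> substok1 \<phi> a t \<Longrightarrow> wff \<phi> \<Longrightarrow> wf_trm arF s \<Longrightarrow> wf_trm arF t \<Longrightarrow>
    derives (Conj (Eq s t) (subst1 \<phi> a s)) (subst1 \<phi> a t)"
  by (rule derives_logical[OF logical_axioms.L23]) (auto simp: wff_subst1)

section \<open>Quantifier rules\<close>

lemma derives_Ex_rename:
  assumes "y \<notin> vars \<psi>" "x \<noteq> y" "wff \<psi>"
  shows "derives (Ex x \<psi>) (Ex y (subst1 \<psi> x (Var y)))"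
proof -
  let ?p = "subst1 \<psi> x (Var y)"
  have wf: "wff ?p" using assms(3) by (simp add: wff_subst1)
  have "derives (subst1 ?p y (Var x)) (Ex y ?p)"
    using substok1_rename_back[OF assms(1)] wf by (intro derives_ExI) auto
  then have "derives \<psi> (Ex y ?p)" using subst1_rename_back[OF assms(1)] by simp
  then have "derives (Ex x \<psi>) (Ex x (Ex y ?p))" by (rule derives_Ex_cong)
  also have "derives (Ex x (Ex y ?p)) (Ex y ?p)"
    using fv_subst1_Var[of \<psi> x y] assms(2) wf by (intro derives_Ex_vacuous) auto
  finally show ?thesis .
qed

lemma derives_ExL:
  assumes y: "y \<notin> vars (Ex x \<psi>)" "y \<notin> fv \<alpha>" "y \<notin> fv \<beta>"
    and wf: "wff \<psi>" "wff \<alpha>" "wff \<beta>"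
    and "derives (Conj (subst1 \<psi> x (Var y)) (Conj (Ex x \<psi>) \<alpha>)) \<beta>"
  shows "derives (Conj (Ex x \<psi>) \<alpha>) \<beta>"
proof -
  let ?p = "subst1 \<psi> x (Var y)" and ?A = "Conj (Ex x \<psi>) \<alpha>"
  have wf': "wff ?p" "wff ?A" using wf by (simp_all add: wff_subst1)
  have "derives ?A (Conj (Ex x \<psi>) ?A)"
    using wf by (intro derives_conjI derives_conjunct1 derives_refl) auto
  also have "derives (Conj (Ex x \<psi>) ?A) (Conj (Ex y ?p) ?A)"
    using y wf by (intro derives_Conj_cong1 derives_Ex_rename) auto
  also have "derives (Conj (Ex y ?p) ?A) (Conj ?A (Ex y ?p))"
    using wf' by (intro derives_conj_commute) auto
  also have "derives (Conj ?A (Ex y ?p)) (Ex y (Conj ?A ?p))"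
    using y wf' fv_subset_vars[of \<psi>] by (intro derives_Conj_Ex) auto
  also have "derives (Ex y (Conj ?A ?p)) (Ex y \<beta>)"
    using derives_trans[OF derives_conj_commute assms(7)] wf' by (intro derives_Ex_cong)
  also have "derives (Ex y \<beta>) \<beta>" using y wf by (intro derives_Ex_vacuous)
  finally show ?thesis .
qed

lemma derives_BAll_rename_nonoccurring:
  assumes "x \<notin> fv_trm s" "y \<notin> vars \<psi>" "x \<noteq> y" "wff \<psi>" "wf_trm arF s"
  shows "derives (BAll y s (subst1 \<psi> x (Var y))) (BAll x s \<psi>)"
proof -
  let ?p = "subst1 \<psi> x (Var y)"
  let ?B = "BAll y s ?p"
  have wf: "wff ?p" "wff ?B" using assms by (simp_all add: wff_subst1)
  have "x \<notin> fv ?B" using assms(1,3) fv_subst1_Var[of \<psi> x y] by auto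
  then have "derives ?B (BAll x s (Conj ?B (In (Var x) s)))"
    using assms wf by (intro derives_BAll_vacuous)
  also have "derives (BAll x s (Conj ?B (In (Var x) s))) (BAll x s \<psi>)"
  proof (rule derives_BAll_cong)
    have "derives (Conj ?B (In (Var x) s)) (Conj (In (Var x) s) ?B)"
      using wf assms by (intro derives_conj_commute) auto
    also have "derives (Conj (In (Var x) s) ?B) (subst1 ?p y (Var x))"
      using substok1_rename_back[OF assms(2)] assms wf by (intro derives_BAllE) auto
    finally show "derives (Conj ?B (In (Var x) s)) \<psi>" using subst1_rename_back[OF assms(2)] by simp
  qed (use assms in auto)
  finally show ?thesis .
qed

lemma derives_BAll_bound_Eq:
  assumes "wff \<psi>" "wf_trm arF s" "wf_trm arF u" "wf_trm arF w"
  shows "derives (Conj (Eq u w) (BAll z (tsubst (Var(x := u)) s) \<psi>))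
    (BAll z (tsubst (Var(x := w)) s) \<psi>)"
proof -
  obtain a where a: "a \<notin> fv_trm s \<union> fv \<psi>"
    using ex_new_if_finite[OF infinite_UNIV_nat, of "fv_trm s \<union> fv \<psi>"]
      finite_subset[OF fv_subset_vars] by auto
  let ?\<phi> = "BAll z (tsubst (Var(x := Var a)) s) \<psi>"
  have "derives (Conj (Eq u w) (subst1 ?\<phi> a u)) (subst1 ?\<phi> a w)"
    using a assms by (intro derives_Eq_subst substok1_BAll_bound) (auto intro: wf_tsubst)
  then show ?thesis using a by (simp add: subst1_BAll_bound)
qed

lemma derives_Ex_Eq_fresh:
  assumes "v \<notin> fv \<phi>" "v \<noteq> x" "wff \<phi>"
  shows "derives \<phi> (Ex v (Conj \<phi> (Eq (Var v) (Var x))))"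
proof -
  let ?E = "Eq (Var v) (Var x) :: ('f, 'p) fm"
  have "subst1 ?E v (Var x) = Eq (Var x) (Var x)" using assms by (simp add: subst1_def)
  moreover have "derives (subst1 ?E v (Var x)) (Ex v ?E)"
    by (rule derives_ExI) (auto simp: substok1_def)
  ultimately have "derives Top (Ex v ?E)" using derives_trans[OF derives_Eq_refl[of "Var x"]] by simp
  then have "derives \<phi> (Ex v ?E)" by (rule derives_trans[OF derives_Top[OF assms(3)]])
  then have "derives \<phi> (Conj \<phi> (Ex v ?E))" using assms(3) by (intro derives_conjI derives_refl)
  also have "derives (Conj \<phi> (Ex v ?E)) (Ex v (Conj \<phi> ?E))"
    using assms by (intro derives_Conj_Ex) auto
  finally show ?thesis .
qed

text \<open>When the bounding term s contains x, a fresh v with v = x is introduced: the renaming is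
  then carried out over the bound s[v/x], which does not contain x, and the equation moves the
  bound back.\<close>

lemma derives_BAll_rename:
  assumes "y \<notin> vars \<psi>" "x \<noteq> y" "y \<notin> fv_trm s" "wff \<psi>" "wf_trm arF s"
  shows "derives (BAll y s (subst1 \<psi> x (Var y))) (BAll x s \<psi>)"
proof -
  let ?p = "subst1 \<psi> x (Var y)"
  let ?B = "BAll y s ?p"
  obtain v where v: "v \<notin> vars \<psi> \<union> fv_trm s \<union> {x, y}"
    using ex_new_if_finite[OF infinite_UNIV_nat, of "vars \<psi> \<union> fv_trm s \<union> {x, y}"] by auto
  let ?s' = "tsubst (Var(x := Var v)) s"
  have wf: "wff ?p" "wff ?B" "wf_trm arF ?s'" using assms by (auto simp: wff_subst1 intro: wf_tsubst)
  have s: "tsubst (Var(x := Var x)) s = s" by simp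
  have "v \<notin> fv ?B" using v fv_subst1_Var[of \<psi> x y] fv_subset_vars[of \<psi>] by auto
  then have "derives ?B (Ex v (Conj ?B (Eq (Var v) (Var x))))"
    using v wf by (intro derives_Ex_Eq_fresh) auto
  also have "derives (Ex v (Conj ?B (Eq (Var v) (Var x)))) (Ex v (BAll x s \<psi>))"
  proof (rule derives_Ex_cong)
    let ?E = "Eq (Var v) (Var x) :: ('f, 'p) fm"
    have "derives (Conj ?B ?E) (Conj ?E (Conj (Eq (Var x) (Var v)) ?B))"
      using wf by (intro derives_conjI derives_conjunct2 derives_conjunct1
          derives_trans[OF derives_conjunct2 derives_Eq_sym]) auto
    also have "derives (Conj (Eq (Var x) (Var v)) ?B) (BAll y ?s' ?p)"
      using derives_BAll_bound_Eq[of ?p s "Var x" "Var v" y x] assms wf by (simp add: s)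
    then have "derives (Conj ?E (Conj (Eq (Var x) (Var v)) ?B)) (Conj ?E (BAll y ?s' ?p))"
      by (rule derives_Conj_cong2) simp
    also have "derives (Conj ?E (BAll y ?s' ?p)) (Conj ?E (BAll x ?s' \<psi>))"
      using v assms wf fv_tsubst[of "Var(x := Var v)" s]
      by (intro derives_Conj_cong2 derives_BAll_rename_nonoccurring) (auto split: if_splits)
    also have "derives (Conj ?E (BAll x ?s' \<psi>)) (BAll x s \<psi>)"
      using derives_BAll_bound_Eq[of \<psi> s "Var v" "Var x" x x] assms wf by (simp add: s)
    finally show "derives (Conj ?B ?E) (BAll x s \<psi>)" .
  qed
  also have "derives (Ex v (BAll x s \<psi>)) (BAll x s \<psi>)"
    using v fv_subset_vars[of \<psi>] assms by (intro derives_Ex_vacuous) auto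
  finally show ?thesis .
qed

lemma derives_BAllR:
  assumes y: "y \<notin> vars (BAll x s \<psi>)" "y \<notin> fv \<alpha>" "y \<notin> fv \<beta>"
    and wf: "wff \<psi>" "wf_trm arF s" "wff \<alpha>" "wff \<beta>"
    and "derives (Conj (In (Var y) s) \<alpha>) (Disj (subst1 \<psi> x (Var y)) (Disj (BAll x s \<psi>) \<beta>))"
  shows "derives \<alpha> (Disj (BAll x s \<psi>) \<beta>)"
proof -
  let ?p = "subst1 \<psi> x (Var y)" and ?D = "Disj (BAll x s \<psi>) \<beta>"
  have wf': "wff ?p" "wff ?D" using wf by (simp_all add: wff_subst1)
  have "derives \<alpha> (BAll y s (Conj \<alpha> (In (Var y) s)))"
    using y wf by (intro derives_BAll_vacuous) auto
  also have "derives (BAll y s (Conj \<alpha> (In (Var y) s))) (BAll y s (Disj ?D ?p))"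
  proof (rule derives_BAll_cong)
    have "derives (Conj \<alpha> (In (Var y) s)) (Conj (In (Var y) s) \<alpha>)"
      using wf by (intro derives_conj_commute) auto
    also note assms(8)
    also have "derives (Disj ?p ?D) (Disj ?D ?p)" using wf' by (intro derives_disj_commute)
    finally show "derives (Conj \<alpha> (In (Var y) s)) (Disj ?D ?p)" .
  qed (use wf in auto)
  also have "derives (BAll y s (Disj ?D ?p)) (Disj ?D (BAll y s ?p))"
    using y wf wf' fv_subset_vars[of \<psi>] by (intro derives_BAll_Disj) auto
  also have "derives (Disj ?D (BAll y s ?p)) (Disj ?D (BAll x s \<psi>))"
    using y wf wf' by (intro derives_Disj_cong2 derives_BAll_rename) auto
  also have "derives (Disj ?D (BAll x s \<psi>)) ?D"
    using wf' wf by (intro derives_disjE derives_refl derives_disjI1) auto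
  finally show ?thesis .
qed

end


section \<open>A maximal consistent pair\<close>

context calculus
begin

definition consistent :: "('f, 'p) fm list \<Rightarrow> ('f, 'p) fm list \<Rightarrow> bool" where
  "consistent \<Gamma> \<Delta> \<longleftrightarrow> \<not> derives (conjs \<Gamma>) (disjs \<Delta>)"

lemma consistent_cut: "consistent \<Gamma> \<Delta> \<Longrightarrow> \<not> consistent (\<phi> # \<Gamma>) \<Delta> \<Longrightarrow> consistent \<Gamma> (\<phi> # \<Delta>)"
  unfolding consistent_def using derives_cut by auto

lemma consistent_Ex_witness:
  assumes "consistent (Ex x \<psi> # \<Gamma>) \<Delta>"
    and "y \<notin> vars (Ex x \<psi>)" "y \<notin> fv (conjs \<Gamma>)" "y \<notin> fv (disjs \<Delta>)"
    and "wff (Ex x \<psi>)" "\<forall>\<phi>\<in>set \<Gamma> \<union> set \<Delta>. wff \<phi>"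
  shows "consistent (subst1 \<psi> x (Var y) # Ex x \<psi> # \<Gamma>) \<Delta>"
  unfolding consistent_def
proof
  assume "derives (conjs (subst1 \<psi> x (Var y) # Ex x \<psi> # \<Gamma>)) (disjs \<Delta>)"
  then have "derives (Conj (Ex x \<psi>) (conjs \<Gamma>)) (disjs \<Delta>)"
    using assms(2-6) by (intro derives_ExL) auto
  then show False using assms(1) unfolding consistent_def by simp
qed

lemma consistent_BAll_counterwitness:
  assumes "consistent \<Gamma> (BAll x s \<psi> # \<Delta>)"
    and "y \<notin> vars (BAll x s \<psi>)" "y \<notin> fv (conjs \<Gamma>)" "y \<notin> fv (disjs \<Delta>)"
    and "wff (BAll x s \<psi>)" "\<forall>\<phi>\<in>set \<Gamma> \<union> set \<Delta>. wff \<phi>"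
  shows "consistent (In (Var y) s # \<Gamma>) (subst1 \<psi> x (Var y) # BAll x s \<psi> # \<Delta>)"
  unfolding consistent_def
proof
  assume "derives (conjs (In (Var y) s # \<Gamma>)) (disjs (subst1 \<psi> x (Var y) # BAll x s \<psi> # \<Delta>))"
  then have "derives (conjs \<Gamma>) (Disj (BAll x s \<psi>) (disjs \<Delta>))"
    using assms(2-6) by (intro derives_BAllR) auto
  then show False using assms(1) unfolding consistent_def by simp
qed

end

definition vars_pair :: "('f, 'p) fm list \<times> ('f, 'p) fm list \<Rightarrow> nat set" where
  "vars_pair st = (\<Union>\<phi>\<in>set (fst st) \<union> set (snd st). vars \<phi>)"

text \<open>Besides being fresh, the witness chosen when the n-th formula is treated exceeds n. Hence the
  witnesses for the infinitely many formulas Ex y (Eq (Var y) (Var z)) are unbounded: every element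
  of the term model is named by variables outside any given finite set.\<close>

definition witness :: "nat \<Rightarrow> ('f, 'p) fm list \<times> ('f, 'p) fm list \<Rightarrow> ('f, 'p) fm \<Rightarrow> nat" where
  "witness n st \<phi> = Suc (Max ({n} \<union> vars_pair st \<union> vars \<phi>))"

lemma witness_fresh:
  "witness n st \<phi> \<notin> vars_pair st" "witness n st \<phi> \<notin> vars \<phi>" "n < witness n st \<phi>"
proof -
  have "finite ({n} \<union> vars_pair st \<union> vars \<phi>)" by (simp add: vars_pair_def)
  then have "k < witness n st \<phi>" if "k \<in> {n} \<union> vars_pair st \<union> vars \<phi>" for k
    using that unfolding witness_def by (simp add: le_imp_less_Suc)
  then show "witness n st \<phi> \<notin> vars_pair st" "witness n st \<phi> \<notin> vars \<phi>" "n < witness n st \<phi>"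
    by auto
qed

lemma mono_chain_finite_subset:
  fixes A :: "nat \<Rightarrow> 'a set"
  assumes "mono A" "finite S" "S \<subseteq> (\<Union>n. A n)"
  shows "\<exists>n. S \<subseteq> A n"
  using assms(2,3)
proof (induction rule: finite_induct)
  case (insert x S)
  then obtain m n where "x \<in> A m" "S \<subseteq> A n" by auto
  then have "insert x S \<subseteq> A (max m n)"
    using monoD[OF assms(1), of m "max m n"] monoD[OF assms(1), of n "max m n"] by auto
  then show ?case by blast
qed simp

locale lindenbaum = calculus arF arP Ax
  for arF :: "'f::countable \<Rightarrow> nat" and arP :: "'p::countable \<Rightarrow> nat" and Ax +
  fixes \<chi> \<chi>' :: "('f, 'p) fm"
  assumes wf_chi: "wff \<chi>" "wff \<chi>'"
    and not_derives_chi: "\<not> derives \<chi> \<chi>'"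
begin

definition extend ::
  "nat \<Rightarrow> ('f, 'p) fm list \<times> ('f, 'p) fm list \<Rightarrow> ('f, 'p) fm \<Rightarrow> ('f, 'p) fm list \<times> ('f, 'p) fm list"
where
  "extend n st \<phi> = (let \<Gamma> = fst st; \<Delta> = snd st; y = witness n st \<phi> in
     if \<not> wff \<phi> then st
     else if consistent (\<phi> # \<Gamma>) \<Delta> then
       (case \<phi> of Ex x \<psi> \<Rightarrow> (subst1 \<psi> x (Var y) # \<phi> # \<Gamma>, \<Delta>) | _ \<Rightarrow> (\<phi> # \<Gamma>, \<Delta>))
     else
       (case \<phi> of BAll x s \<psi> \<Rightarrow> (In (Var y) s # \<Gamma>, subst1 \<psi> x (Var y) # \<phi> # \<Delta>)
                | _ \<Rightarrow> (\<Gamma>, \<phi> # \<Delta>)))"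

fun stage :: "nat \<Rightarrow> ('f, 'p) fm list \<times> ('f, 'p) fm list" where
  "stage 0 = ([\<chi>], [\<chi>'])"
| "stage (Suc n) = extend n (stage n) (from_nat n)"

lemma stage_to_nat: "stage (Suc (to_nat \<phi>)) = extend (to_nat \<phi>) (stage (to_nat \<phi>)) \<phi>"
  by simp

lemma extend_mono:
  "set (fst st) \<subseteq> set (fst (extend n st \<phi>)) \<and> set (snd st) \<subseteq> set (snd (extend n st \<phi>))"
  unfolding extend_def Let_def by (cases \<phi>) auto

lemma extend_decides: "wff \<phi> \<Longrightarrow> \<phi> \<in> set (fst (extend n st \<phi>)) \<or> \<phi> \<in> set (snd (extend n st \<phi>))"
  unfolding extend_def Let_def by (cases \<phi>) auto

lemma extend_wf:
  "\<forall>\<psi>\<in>set (fst st) \<union> set (snd st). wff \<psi> \<Longrightarrow>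
    \<forall>\<psi>\<in>set (fst (extend n st \<phi>)) \<union> set (snd (extend n st \<phi>)). wff \<psi>"
  unfolding extend_def Let_def by (cases \<phi>) (auto simp: wff_subst1)

lemma extend_consistent:
  assumes wf: "\<forall>\<psi>\<in>set (fst st) \<union> set (snd st). wff \<psi>"
    and cons: "consistent (fst st) (snd st)"
  shows "consistent (fst (extend n st \<phi>)) (snd (extend n st \<phi>))"
proof -
  obtain \<Gamma> \<Delta> where st: "st = (\<Gamma>, \<Delta>)" by (cases st)
  let ?y = "witness n st \<phi>"
  have fresh: "?y \<notin> fv (conjs \<Gamma>)" "?y \<notin> fv (disjs \<Delta>)" "?y \<notin> vars \<phi>"
    using witness_fresh[of n st \<phi>] fv_subset_vars
    unfolding fv_conjs fv_disjs vars_pair_def st by fastforce+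
  consider (skip) "\<not> wff \<phi>"
    | (left) "wff \<phi>" "consistent (\<phi> # \<Gamma>) \<Delta>"
    | (right) "wff \<phi>" "\<not> consistent (\<phi> # \<Gamma>) \<Delta>"
    by blast
  then show ?thesis
  proof cases
    case skip
    then show ?thesis using cons by (simp add: extend_def)
  next
    case left
    show ?thesis
    proof (cases \<phi>)
      case (Ex x \<psi>)
      then show ?thesis
        using left consistent_Ex_witness[of x \<psi> \<Gamma> \<Delta> ?y] fresh wf st by (simp add: extend_def)
    qed (use left st in \<open>simp_all add: extend_def\<close>)
  next
    case right
    then have cons': "consistent \<Gamma> (\<phi> # \<Delta>)" using cons st consistent_cut by auto
    show ?thesis
    proof (cases \<phi>)
      case (BAll x s \<psi>)
      then show ?thesis
        using right cons' consistent_BAll_counterwitness[of \<Gamma> x s \<psi> \<Delta> ?y] fresh wf st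
        by (simp add: extend_def Let_def)
    qed (use right cons' st in \<open>simp_all add: extend_def\<close>)
  qed
qed

lemma stage_invariant:
  "(\<forall>\<psi>\<in>set (fst (stage n)) \<union> set (snd (stage n)). wff \<psi>) \<and> consistent (fst (stage n)) (snd (stage n))"
proof (induction n)
  case 0
  have "\<not> derives (Conj \<chi> Top) (Disj \<chi>' Bot)"
  proof
    assume "derives (Conj \<chi> Top) (Disj \<chi>' Bot)"
    moreover have "derives \<chi> (Conj \<chi> Top)" using wf_chi by (intro derives_conjI derives_refl derives_Top)
    moreover have "derives (Disj \<chi>' Bot) \<chi>'" using wf_chi by (intro derives_disjE derives_refl Bot_derives)
    ultimately show False using not_derives_chi by (blast intro: derives_trans)
  qed
  then show ?case using wf_chi unfolding consistent_def by simp
next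
  case (Suc n)
  then show ?case
    using extend_wf[of "stage n" n "from_nat n"] extend_consistent[of "stage n" n "from_nat n"] by simp
qed

lemma stage_mono: "mono (\<lambda>n. set (fst (stage n)))" "mono (\<lambda>n. set (snd (stage n)))"
  unfolding mono_iff_le_Suc using extend_mono by auto

definition Pos :: "('f, 'p) fm set" where
  "Pos = (\<Union>n. set (fst (stage n)))"

definition Neg :: "('f, 'p) fm set" where
  "Neg = (\<Union>n. set (snd (stage n)))"

lemma Pos_wff: "\<phi> \<in> Pos \<Longrightarrow> wff \<phi>" and Neg_wff: "\<phi> \<in> Neg \<Longrightarrow> wff \<phi>"
  unfolding Pos_def Neg_def using stage_invariant by blast+

lemma chi_Pos: "\<chi> \<in> Pos" and chi'_Neg: "\<chi>' \<in> Neg"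
  unfolding Pos_def Neg_def by (metis UN_I UNIV_I list.set_intros(1) stage.simps(1) fst_conv snd_conv)+

lemma Pos_Neg_consistent:
  assumes "set \<Gamma> \<subseteq> Pos" "set \<Delta> \<subseteq> Neg"
  shows "consistent \<Gamma> \<Delta>"
proof -
  obtain m n where "set \<Gamma> \<subseteq> set (fst (stage m))" "set \<Delta> \<subseteq> set (snd (stage n))"
    using mono_chain_finite_subset[OF stage_mono(1), of "set \<Gamma>"]
      mono_chain_finite_subset[OF stage_mono(2), of "set \<Delta>"] assms
    unfolding Pos_def Neg_def by auto
  then have sub: "set \<Gamma> \<subseteq> set (fst (stage (max m n)))" "set \<Delta> \<subseteq> set (snd (stage (max m n)))"
    using monoD[OF stage_mono(1), of m "max m n"] monoD[OF stage_mono(2), of n "max m n"] by auto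
  obtain \<Gamma>' \<Delta>' where st: "stage (max m n) = (\<Gamma>', \<Delta>')" by (cases "stage (max m n)")
  have wf: "\<forall>\<psi>\<in>set \<Gamma>' \<union> set \<Delta>'. wff \<psi>" and "consistent \<Gamma>' \<Delta>'"
    using stage_invariant[of "max m n"] st by auto
  moreover have "derives (conjs \<Gamma>') (conjs \<Gamma>)" "derives (disjs \<Delta>) (disjs \<Delta>')"
    using sub st wf by (auto intro: conjs_derives_subset disjs_derives_subset)
  ultimately show ?thesis unfolding consistent_def by (metis derives_trans)
qed

lemma Pos_or_Neg: "wff \<phi> \<Longrightarrow> \<phi> \<in> Pos \<or> \<phi> \<in> Neg"
  using extend_decides stage_to_nat unfolding Pos_def Neg_def by (metis UN_I UNIV_I)

lemma Pos_not_Neg: "\<phi> \<in> Pos \<Longrightarrow> \<phi> \<notin> Neg"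
proof
  assume "\<phi> \<in> Pos" "\<phi> \<in> Neg"
  moreover from this have "derives (conjs [\<phi>]) (disjs [\<phi>])"
    using Pos_wff by (auto intro: derives_trans[OF derives_conjunct1 derives_disjI1])
  ultimately show False using Pos_Neg_consistent[of "[\<phi>]" "[\<phi>]"] by (auto simp: consistent_def)
qed

lemma Pos_closed: "set \<Gamma> \<subseteq> Pos \<Longrightarrow> derives (conjs \<Gamma>) \<psi> \<Longrightarrow> \<psi> \<in> Pos"
proof (rule ccontr)
  assume \<Gamma>: "set \<Gamma> \<subseteq> Pos" and d: "derives (conjs \<Gamma>) \<psi>" and "\<psi> \<notin> Pos"
  moreover have wf: "wff \<psi>" using derives_wf[OF d] by simp
  ultimately have "\<psi> \<in> Neg" using Pos_or_Neg by auto
  moreover have "derives (conjs \<Gamma>) (disjs [\<psi>])" using d wf by (auto intro: derives_trans[OF _ derives_disjI1])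
  ultimately show False using Pos_Neg_consistent[of \<Gamma> "[\<psi>]"] \<Gamma> by (auto simp: consistent_def)
qed

lemma Pos_derives:
  assumes "\<phi> \<in> Pos" "derives \<phi> \<psi>"
  shows "\<psi> \<in> Pos"
proof -
  have "derives (conjs [\<phi>]) \<phi>" using Pos_wff[OF assms(1)] by (simp add: derives_conjunct1)
  then show ?thesis using Pos_closed[of "[\<phi>]" \<psi>] derives_trans[OF _ assms(2)] assms(1) by simp
qed

lemma Pos_derives2:
  assumes "\<phi> \<in> Pos" "\<psi> \<in> Pos" "derives (Conj \<phi> \<psi>) \<alpha>"
  shows "\<alpha> \<in> Pos"
proof -
  have "wff \<phi>" "wff \<psi>" using assms Pos_wff by auto
  then have "derives (conjs [\<phi>, \<psi>]) (Conj \<phi> \<psi>)"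
    by (auto intro!: derives_conjI derives_conjunct1 derives_trans[OF derives_conjunct2 derives_conjunct1])
  then show ?thesis using Pos_closed[of "[\<phi>, \<psi>]" \<alpha>] derives_trans[OF _ assms(3)] assms(1,2) by simp
qed

lemma Top_Pos: "Top \<in> Pos"
  using Pos_derives[OF chi_Pos derives_Top[OF wf_chi(1)]] .

lemma Bot_not_Pos: "Bot \<notin> Pos"
  using Pos_not_Neg[of \<chi>'] chi'_Neg Pos_derives[of Bot \<chi>'] Bot_derives[OF wf_chi(2)] by auto

lemma Conj_Pos_iff:
  assumes "wff (Conj \<phi> \<psi>)"
  shows "Conj \<phi> \<psi> \<in> Pos \<longleftrightarrow> \<phi> \<in> Pos \<and> \<psi> \<in> Pos"
proof -
  have "wff \<phi>" "wff \<psi>" using assms by auto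
  then show ?thesis
    using Pos_derives derives_conjunct1 derives_conjunct2 Pos_derives2 derives_refl[OF assms] by blast
qed

lemma Disj_Pos_iff: "wff (Disj \<phi> \<psi>) \<Longrightarrow> Disj \<phi> \<psi> \<in> Pos \<longleftrightarrow> \<phi> \<in> Pos \<or> \<psi> \<in> Pos"
proof
  assume wf: "wff (Disj \<phi> \<psi>)" and Disj: "Disj \<phi> \<psi> \<in> Pos"
  show "\<phi> \<in> Pos \<or> \<psi> \<in> Pos"
  proof (rule ccontr)
    assume "\<not> (\<phi> \<in> Pos \<or> \<psi> \<in> Pos)"
    then have "\<phi> \<in> Neg" "\<psi> \<in> Neg" using Pos_or_Neg wf by auto
    moreover have "derives (conjs [Disj \<phi> \<psi>]) (disjs [\<phi>, \<psi>])" using wf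
      by (auto intro!: derives_trans[OF derives_conjunct1] derives_disjE derives_disjI1
          derives_trans[OF derives_disjI1 derives_disjI2])
    ultimately show False
      using Pos_Neg_consistent[of "[Disj \<phi> \<psi>]" "[\<phi>, \<psi>]"] Disj by (simp add: consistent_def)
  qed
next
  assume "wff (Disj \<phi> \<psi>)" "\<phi> \<in> Pos \<or> \<psi> \<in> Pos"
  then show "Disj \<phi> \<psi> \<in> Pos" by (auto intro: Pos_derives derives_disjI1 derives_disjI2)
qed

lemma Ex_Pos_witness:
  assumes "Ex x \<psi> \<in> Pos"
  shows "subst1 \<psi> x (Var (witness (to_nat (Ex x \<psi>)) (stage (to_nat (Ex x \<psi>))) (Ex x \<psi>))) \<in> Pos"
proof -
  let ?n = "to_nat (Ex x \<psi>)"
  have "Ex x \<psi> \<notin> set (snd (stage (Suc ?n)))"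
    using assms Pos_not_Neg unfolding Neg_def by blast
  then have "subst1 \<psi> x (Var (witness ?n (stage ?n) (Ex x \<psi>))) \<in> set (fst (stage (Suc ?n)))"
    using Pos_wff[OF assms] unfolding stage_to_nat extend_def by (auto simp: Let_def split: if_splits)
  then show ?thesis unfolding Pos_def by blast
qed

lemma BAll_not_Pos_witness:
  assumes "wff (BAll x s \<psi>)" "BAll x s \<psi> \<notin> Pos"
  obtains y where "y \<notin> vars (BAll x s \<psi>)" "In (Var y) s \<in> Pos" "subst1 \<psi> x (Var y) \<notin> Pos"
proof -
  let ?n = "to_nat (BAll x s \<psi>)"
  let ?y = "witness ?n (stage ?n) (BAll x s \<psi>)"
  have "BAll x s \<psi> \<notin> set (fst (stage (Suc ?n)))"
    using assms(2) unfolding Pos_def by blast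
  then have "In (Var ?y) s \<in> set (fst (stage (Suc ?n)))"
    "subst1 \<psi> x (Var ?y) \<in> set (snd (stage (Suc ?n)))"
    using assms(1) unfolding stage_to_nat extend_def by (auto simp: Let_def split: if_splits)
  then have "In (Var ?y) s \<in> Pos" "subst1 \<psi> x (Var ?y) \<notin> Pos"
    using Pos_not_Neg unfolding Pos_def Neg_def by blast+
  then show thesis using witness_fresh(2) that by blast
qed

lemma Pos_Eq_wf: "Eq s t \<in> Pos \<Longrightarrow> wf_trm arF s \<and> wf_trm arF t"
  using Pos_wff[of "Eq s t"] by simp

lemma Pos_Eq_refl: "wf_trm arF t \<Longrightarrow> Eq t t \<in> Pos"
  using Pos_derives[OF Top_Pos derives_Eq_refl] by blast

lemma Pos_Eq_sym: "Eq s t \<in> Pos \<Longrightarrow> Eq t s \<in> Pos"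
  using Pos_derives derives_Eq_sym Pos_Eq_wf by blast

lemma Pos_Eq_trans: "Eq r s \<in> Pos \<Longrightarrow> Eq s t \<in> Pos \<Longrightarrow> Eq r t \<in> Pos"
  using Pos_derives2 derives_Eq_trans Pos_Eq_wf by blast

lemma Pos_Eq_subst:
  assumes "Eq s t \<in> Pos" "subst1 \<phi> a s \<in> Pos" "substok1 \<phi> a s" "substok1 \<phi> a t" "wff \<phi>"
  shows "subst1 \<phi> a t \<in> Pos"
  using Pos_derives2[OF assms(1,2) derives_Eq_subst] assms Pos_Eq_wf by blast

lemma Pos_Eq_Var:
  assumes "wf_trm arF t"
  obtains m where "Eq (Var m) t \<in> Pos"
proof -
  obtain y where y: "y \<notin> fv_trm t"
    using ex_new_if_finite[OF infinite_UNIV_nat, of "fv_trm t"] by auto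
  let ?E = "Eq (Var y) t :: ('f, 'p) fm"
  have E: "subst1 ?E y u = Eq u t" for u
    using y by (simp add: subst1_def tsubst_fresh)
  have "derives (subst1 ?E y t) (Ex y ?E)"
    using assms by (intro derives_ExI) (auto simp: substok1_def)
  then have "Ex y ?E \<in> Pos" using Pos_derives[OF Pos_Eq_refl[OF assms]] E by simp
  from Ex_Pos_witness[OF this] show thesis using that unfolding E by blast
qed

lemma Pos_Eq_Var_avoiding:
  assumes "finite S"
  obtains w where "w \<notin> S" "Eq (Var w) (Var z) \<in> Pos"
proof -
  define E where "E y = (Ex y (Eq (Var y) (Var z)) :: ('f, 'p) fm)" for y
  have E: "subst1 (Eq (Var y) (Var z) :: ('f, 'p) fm) y u = Eq u (Var z)" if "y \<noteq> z" for y u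
    using that by (simp add: subst1_def)
  have "inj_on (\<lambda>y. to_nat (E y)) {y. y \<noteq> z}" by (auto simp: inj_on_def E_def)
  moreover have "infinite {y :: nat. y \<noteq> z}" by (simp add: infinite_UNIV_nat)
  ultimately have "infinite ((\<lambda>y. to_nat (E y)) ` {y. y \<noteq> z})"
    using finite_imageD by blast
  then have "(\<lambda>y. to_nat (E y)) ` {y. y \<noteq> z} - {..Max (insert 0 S)} \<noteq> {}"
    using Diff_infinite_finite[OF finite_atMost] infinite_imp_nonempty by blast
  then obtain n where "n \<in> (\<lambda>y. to_nat (E y)) ` {y. y \<noteq> z}" "n \<notin> {..Max (insert 0 S)}"
    by blast
  then obtain y where y: "y \<noteq> z" "Max (insert 0 S) < to_nat (E y)" by auto
  let ?w = "witness (to_nat (E y)) (stage (to_nat (E y))) (E y)"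
  have "derives (subst1 (Eq (Var y) (Var z)) y (Var z)) (E y)"
    unfolding E_def by (intro derives_ExI) (auto simp: substok1_def)
  then have "E y \<in> Pos" using Pos_derives[OF Pos_Eq_refl[of "Var z"]] E[OF y(1)] by simp
  then have "Eq (Var ?w) (Var z) \<in> Pos"
    using Ex_Pos_witness[of y "Eq (Var y) (Var z)"] E[OF y(1)] unfolding E_def by simp
  moreover have "?w \<notin> S"
  proof
    assume "?w \<in> S"
    then have "?w \<le> Max (insert 0 S)" using assms by simp
    moreover have "to_nat (E y) < ?w" by (rule witness_fresh(3))
    ultimately show False using y(2) by simp
  qed
  ultimately show thesis using that by blast
qed

text \<open>The arguments are replaced one at a time, each by an instance of (L23) at a variable a
  outside X.\<close>

lemma Pos_Eq_cong:
  fixes K :: "'f trm list \<Rightarrow> ('f, 'p) fm"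
  assumes "finite X"
    and subst1_K: "\<And>ts a u. a \<notin> X \<Longrightarrow> subst1 (K ts) a u = K (map (tsubst (Var(a := u))) ts)"
    and substok1_K: "\<And>ts a u. substok1 (K ts) a u"
    and wf_K: "\<And>ts. wff (K ts) \<longleftrightarrow> length ts = N \<and> (\<forall>t\<in>set ts. wf_trm arF t)"
  shows "list_all2 (\<lambda>s t. Eq s t \<in> Pos) ts ts' \<Longrightarrow> K (pre @ ts) \<in> Pos \<Longrightarrow> K (pre @ ts') \<in> Pos"
proof (induction ts ts' arbitrary: pre rule: list_all2_induct)
  case (Cons t ts t' ts')
  let ?V = "X \<union> (\<Union>u\<in>set pre. fv_trm u) \<union> (\<Union>u\<in>set ts. fv_trm u)"
  obtain a where a: "a \<notin> ?V"
    using ex_new_if_finite[OF infinite_UNIV_nat, of ?V] assms(1) by auto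
  have "map (tsubst (Var(a := u))) (pre @ Var a # ts) = pre @ u # ts" for u
    using a by (auto intro!: map_idI tsubst_fresh)
  then have K: "subst1 (K (pre @ Var a # ts)) a u = K (pre @ u # ts)" for u
    using subst1_K[of a "pre @ Var a # ts" u] a by simp
  have "wff (K (pre @ t # ts))" using Cons.prems Pos_wff by simp
  then have "wff (K (pre @ Var a # ts))" unfolding wf_K by auto
  then have "subst1 (K (pre @ Var a # ts)) a t' \<in> Pos"
    using Pos_Eq_subst[OF Cons.hyps(1), of "K (pre @ Var a # ts)" a] Cons.prems K substok1_K
    by simp
  then have "K ((pre @ [t']) @ ts) \<in> Pos" using K by simp
  then have "K ((pre @ [t']) @ ts') \<in> Pos" by (rule Cons.IH)
  then show ?case by simp
qed simp

end

section \<open>The term model\<close>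

locale term_model = lindenbaum arF arP Ax \<chi> \<chi>'
  for arF :: "'f::countable \<Rightarrow> nat" and arP :: "'p::countable \<Rightarrow> nat" and Ax \<chi> \<chi>' +
  fixes enc :: "nat \<Rightarrow> 'u"
  assumes inj_enc: "inj enc"
begin

text \<open>A term t denotes enc m for the least m with Eq (Var m) t in Pos; an element u of the model
  is read back as the variable Var (inv enc u), through which the symbols are interpreted
  syntactically.\<close>

definition rep :: "'f trm \<Rightarrow> nat" where
  "rep t = (LEAST m. Eq (Var m) t \<in> Pos)"

definition cls :: "'f trm \<Rightarrow> 'u" where
  "cls t = enc (rep t)"

definition TM :: "('u, 'f, 'p) struc" where
  "TM = \<lparr>dom = range (\<lambda>z. cls (Var z)),
         fint = (\<lambda>f us. cls (Fn f (map (\<lambda>u. Var (inv enc u)) us))),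
         pint = (\<lambda>P us. Atom P (map (\<lambda>u. Var (inv enc u)) us) \<in> Pos)\<rparr>"

definition canon :: "nat \<Rightarrow> 'u" where
  "canon z = cls (Var z)"

lemma Pos_Eq_rep: "wf_trm arF t \<Longrightarrow> Eq (Var (rep t)) t \<in> Pos"
  unfolding rep_def by (rule LeastI_ex) (blast elim: Pos_Eq_Var)

lemma cls_eq_iff:
  assumes "wf_trm arF s" "wf_trm arF t"
  shows "cls s = cls t \<longleftrightarrow> Eq s t \<in> Pos"
proof
  assume "cls s = cls t"
  then have "rep s = rep t" unfolding cls_def using inj_enc by (simp add: inj_eq)
  then show "Eq s t \<in> Pos"
    using Pos_Eq_rep[OF assms(1)] Pos_Eq_rep[OF assms(2)] Pos_Eq_sym Pos_Eq_trans by metis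
next
  assume "Eq s t \<in> Pos"
  then have "Eq (Var m) s \<in> Pos \<longleftrightarrow> Eq (Var m) t \<in> Pos" for m
    using Pos_Eq_sym Pos_Eq_trans by metis
  then show "cls s = cls t" unfolding cls_def rep_def by simp
qed

lemma inv_enc_cls [simp]: "inv enc (cls t) = rep t"
  unfolding cls_def using inj_enc by simp

lemma dom_TM: "dom TM = range canon"
  unfolding TM_def canon_def by simp

lemma fint_TM: "fint TM f us = cls (Fn f (map (\<lambda>u. Var (inv enc u)) us))"
  unfolding TM_def by simp

lemma pint_TM: "pint TM P us \<longleftrightarrow> Atom P (map (\<lambda>u. Var (inv enc u)) us) \<in> Pos"
  unfolding TM_def by simp

lemma cls_in_dom: "wf_trm arF t \<Longrightarrow> cls t \<in> dom TM"
  using cls_eq_iff[of t "Var (rep t)"] Pos_Eq_rep Pos_Eq_sym unfolding dom_TM canon_def by auto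

lemma Pos_Atom_cong:
  "list_all2 (\<lambda>s t. Eq s t \<in> Pos) ts ts' \<Longrightarrow> Atom P ts \<in> Pos \<Longrightarrow> Atom P ts' \<in> Pos"
  using Pos_Eq_cong[of "{}" "Atom P" "parity arP P" ts ts' "[]"]
  by (auto simp: subst1_def substok1_def)

lemma Pos_Fn_cong:
  assumes "list_all2 (\<lambda>s t. Eq s t \<in> Pos) ts ts'" "wf_trm arF (Fn f ts)"
  shows "Eq (Fn f ts) (Fn f ts') \<in> Pos"
proof -
  let ?X = "\<Union>t\<in>set ts. fv_trm t"
  have "subst1 (Eq (Fn f ts) (Fn f us)) a u = Eq (Fn f ts) (Fn f (map (tsubst (Var(a := u))) us))"
    if "a \<notin> ?X" for us a u
    using that by (auto simp: subst1_def intro!: map_idI tsubst_fresh)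
  moreover have "wff (Eq (Fn f ts) (Fn f us)) \<longleftrightarrow> length us = arF f \<and> (\<forall>t\<in>set us. wf_trm arF t)"
    for us
    using assms(2) by auto
  moreover have "Eq (Fn f ts) (Fn f ([] @ ts)) \<in> Pos" using Pos_Eq_refl assms(2) by simp
  ultimately show ?thesis
    using Pos_Eq_cong[of ?X "\<lambda>us. Eq (Fn f ts) (Fn f us)" "arF f" ts ts' "[]"] assms(1)
    by (auto simp: substok1_def)
qed

lemma Pos_Eq_reps:
  "\<forall>t\<in>set ts. wf_trm arF t \<Longrightarrow> list_all2 (\<lambda>s t. Eq s t \<in> Pos) (map (\<lambda>t. Var (rep t)) ts) ts"
  "\<forall>t\<in>set ts. wf_trm arF t \<Longrightarrow> list_all2 (\<lambda>s t. Eq s t \<in> Pos) ts (map (\<lambda>t. Var (rep t)) ts)"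
  by (induction ts) (auto intro: Pos_Eq_rep Pos_Eq_sym)

lemma eval_canon: "wf_trm arF t \<Longrightarrow> eval TM canon t = cls t"
proof (induction t)
  case (Fn f ts)
  then have reps: "map (\<lambda>u. Var (inv enc u)) (map (eval TM canon) ts) = map (\<lambda>t. Var (rep t)) ts"
    by auto
  have "eval TM canon (Fn f ts) = cls (Fn f (map (\<lambda>t. Var (rep t)) ts))"
    by (simp only: eval.simps fint_TM reps)
  also have "\<dots> = cls (Fn f ts)"
    using Fn.prems by (subst cls_eq_iff) (auto intro!: Pos_Fn_cong Pos_Eq_reps)
  finally show ?case .
qed (simp add: canon_def)

lemma sat_Atom_iff: "wff (Atom P ts) \<Longrightarrow> sat TM canon (Atom P ts) \<longleftrightarrow> Atom P ts \<in> Pos"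
proof -
  assume "wff (Atom P ts)"
  then have wf: "\<forall>t\<in>set ts. wf_trm arF t" by simp
  then have reps: "map (\<lambda>u. Var (inv enc u)) (map (eval TM canon) ts) = map (\<lambda>t. Var (rep t)) ts"
    by (auto simp: eval_canon)
  have "sat TM canon (Atom P ts) \<longleftrightarrow> Atom P (map (\<lambda>t. Var (rep t)) ts) \<in> Pos"
    by (simp only: sat.simps pint_TM reps)
  also have "\<dots> \<longleftrightarrow> Atom P ts \<in> Pos"
    using Pos_Atom_cong Pos_Eq_reps[OF wf] by blast
  finally show ?thesis .
qed

lemma sat_subst1_Var:
  assumes "w \<notin> vars \<psi>"
  shows "sat TM canon (subst1 \<psi> x (Var w)) \<longleftrightarrow> sat TM (canon(x := canon w)) \<psi>"
proof -
  have "(\<lambda>v. eval TM canon ((Var(x := Var w)) v)) = canon(x := canon w)"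
    by auto
  then show ?thesis
    using sat_subst[of "Var(x := Var w)" \<psi> TM canon] substok1_fresh_Var[OF assms, of x]
    unfolding subst1_def substok1_def by simp
qed

lemma canon_avoiding:
  assumes "finite S"
  obtains w where "w \<notin> S" "canon w = canon z"
  using Pos_Eq_Var_avoiding[OF assms, of z] cls_eq_iff unfolding canon_def by auto

lemma sat_Ex_iff_Pos:
  assumes wf: "wff (Ex x \<psi>)"
    and IH: "\<And>w. sat TM canon (subst1 \<psi> x (Var w)) \<longleftrightarrow> subst1 \<psi> x (Var w) \<in> Pos"
  shows "sat TM canon (Ex x \<psi>) \<longleftrightarrow> Ex x \<psi> \<in> Pos"
proof
  assume "sat TM canon (Ex x \<psi>)"
  then obtain z where "sat TM (canon(x := canon z)) \<psi>" by (auto simp: dom_TM)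
  moreover obtain w where w: "w \<notin> vars \<psi>" "canon w = canon z"
    using canon_avoiding[of "vars \<psi>" z] by auto
  ultimately have "subst1 \<psi> x (Var w) \<in> Pos" using IH[of w] sat_subst1_Var[OF w(1), of x] by simp
  moreover have "derives (subst1 \<psi> x (Var w)) (Ex x \<psi>)"
    using substok1_fresh_Var[OF w(1)] wf by (intro derives_ExI) auto
  ultimately show "Ex x \<psi> \<in> Pos" by (rule Pos_derives)
next
  let ?w = "witness (to_nat (Ex x \<psi>)) (stage (to_nat (Ex x \<psi>))) (Ex x \<psi>)"
  assume "Ex x \<psi> \<in> Pos"
  then have "subst1 \<psi> x (Var ?w) \<in> Pos" by (rule Ex_Pos_witness)
  moreover have "?w \<notin> vars \<psi>" using witness_fresh(2)[of _ _ "Ex x \<psi>"] by simp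
  ultimately have "sat TM (canon(x := canon ?w)) \<psi>" using IH sat_subst1_Var by blast
  then show "sat TM canon (Ex x \<psi>)" by (auto simp: dom_TM)
qed

lemma pint_In_iff:
  "wf_trm arF s \<Longrightarrow> pint TM PIn [canon z, eval TM canon s] \<longleftrightarrow> In (Var z) s \<in> Pos"
  using sat_Atom_iff[of PIn "[Var z, s]"] by simp

lemma sat_BAll_iff_Pos:
  assumes wf: "wff (BAll x s \<psi>)"
    and IH: "\<And>w. sat TM canon (subst1 \<psi> x (Var w)) \<longleftrightarrow> subst1 \<psi> x (Var w) \<in> Pos"
  shows "sat TM canon (BAll x s \<psi>) \<longleftrightarrow> BAll x s \<psi> \<in> Pos"
proof
  assume sat: "sat TM canon (BAll x s \<psi>)"
  show "BAll x s \<psi> \<in> Pos"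
  proof (rule ccontr)
    assume "BAll x s \<psi> \<notin> Pos"
    then obtain y where y: "y \<notin> vars (BAll x s \<psi>)" "In (Var y) s \<in> Pos"
      "subst1 \<psi> x (Var y) \<notin> Pos"
      using BAll_not_Pos_witness[OF wf] by blast
    have "canon y \<in> dom TM" "pint TM PIn [canon y, eval TM canon s]"
      using y(2) pint_In_iff wf by (auto simp: dom_TM)
    then have "sat TM (canon(x := canon y)) \<psi>" using sat by simp
    then show False using IH[of y] sat_subst1_Var[of y \<psi> x] y by simp
  qed
next
  assume Pos: "BAll x s \<psi> \<in> Pos"
  show "sat TM canon (BAll x s \<psi>)"
    unfolding sat.simps dom_TM
  proof (intro ballI impI)
    fix d assume "d \<in> range canon" "pint TM PIn [d, eval TM canon s]"
    then obtain z where z: "d = canon z" "pint TM PIn [canon z, eval TM canon s]" by auto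
    obtain w where w: "w \<notin> vars \<psi>" "canon w = canon z"
      using canon_avoiding[of "vars \<psi>" z] by auto
    have "In (Var w) s \<in> Pos" using pint_In_iff[of s w] wf z(2) w(2) by simp
    moreover have "derives (Conj (In (Var w) s) (BAll x s \<psi>)) (subst1 \<psi> x (Var w))"
      using substok1_fresh_Var[OF w(1)] wf by (intro derives_BAllE) auto
    ultimately have "subst1 \<psi> x (Var w) \<in> Pos" using Pos Pos_derives2 by blast
    then show "sat TM (canon(x := d)) \<psi>" using IH[of w] sat_subst1_Var[OF w(1), of x] w z by simp
  qed
qed

lemma sat_iff_Pos: "wff \<phi> \<Longrightarrow> sat TM canon \<phi> \<longleftrightarrow> \<phi> \<in> Pos"
proof (induction "size_fm \<phi>" arbitrary: \<phi> rule: less_induct)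
  case less
  have IH: "sat TM canon (subst1 \<psi> x (Var w)) \<longleftrightarrow> subst1 \<psi> x (Var w) \<in> Pos"
    if "size_fm \<psi> < size_fm \<phi>" "wff \<psi>" for \<psi> x w
    using less.hyps that by (simp add: subst1_def wf_subst)
  show ?case
    using less.prems IH Top_Pos Bot_not_Pos sat_Atom_iff Conj_Pos_iff Disj_Pos_iff less.hyps
      sat_Ex_iff_Pos sat_BAll_iff_Pos
    by (cases \<phi>) auto
qed

lemma admissible_TM: "admissible arF TM"
  unfolding admissible_def is_struc_def
proof (intro conjI allI impI ballI)
  show "dom TM \<noteq> {}" unfolding dom_TM by simp
next
  fix f us assume "length us = arF f \<and> set us \<subseteq> dom TM"
  then show "fint TM f us \<in> dom TM" unfolding fint_TM by (intro cls_in_dom) auto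
next
  fix a b assume "a \<in> dom TM" "b \<in> dom TM"
  then obtain x y where a: "a = canon x" and b: "b = canon y" unfolding dom_TM by auto
  have sat_Atom: "pint TM P [canon x, canon y] \<longleftrightarrow> Atom P [Var x, Var y] \<in> Pos"
    if "parity arP P = 2" for P
    using sat_Atom_iff[of P "[Var x, Var y]"] that by simp
  have compl: "\<beta> \<in> Pos \<longleftrightarrow> \<alpha> \<notin> Pos"
    if "derives Top (Disj \<alpha> \<beta>)" "derives (Conj \<alpha> \<beta>) Bot" for \<alpha> \<beta>
    using that Pos_derives[OF Top_Pos] Disj_Pos_iff Pos_derives2 Bot_not_Pos derives_wf by blast
  show "pint TM PEq [a, b] \<longleftrightarrow> a = b"
    using sat_Atom[of PEq] cls_eq_iff[of "Var x" "Var y"] a b by (simp add: canon_def)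
  show "pint TM PNeq [a, b] \<longleftrightarrow> \<not> pint TM PEq [a, b]"
    using sat_Atom[of PEq] sat_Atom[of PNeq] a b
      compl[OF derives_Eq_or_Neq[of "Var x" "Var y"] derives_Eq_Neq_Bot] by simp
  show "pint TM PNin [a, b] \<longleftrightarrow> \<not> pint TM PIn [a, b]"
    using sat_Atom[of PIn] sat_Atom[of PNin] a b
      compl[OF derives_In_or_Nin[of "Var x" "Var y"] derives_In_Nin_Bot] by simp
qed

text \<open>An assignment is transported to canon by renaming into variables outside those of the axiom;
  since Pos is closed under instances of axioms, the axiom holds.\<close>

lemma TM_models_axiom:
  assumes "ax \<in> Ax" "wff (fst ax)" "wff (snd ax)"
  shows "models_cond TM ax"
  unfolding models_cond_def
proof (intro allI impI)
  fix \<rho> assume \<rho>: "assignment TM \<rho>" and sat1: "sat TM \<rho> (fst ax)"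
  let ?S = "vars (fst ax) \<union> vars (snd ax)"
  have "\<exists>w. w \<notin> ?S \<and> canon w = \<rho> v" for v
  proof -
    obtain z where "\<rho> v = canon z" using \<rho> unfolding assignment_def dom_TM by blast
    then show ?thesis using canon_avoiding[of ?S z] by auto
  qed
  then obtain g where g: "\<And>v. g v \<notin> ?S" "\<And>v. canon (g v) = \<rho> v" by metis
  let ?\<sigma> = "\<lambda>v. Var (g v) :: 'f trm"
  have ok: "substok ?\<sigma> (fst ax)" "substok ?\<sigma> (snd ax)"
    using g(1) by (auto intro!: substok_avoiding)
  have wf: "wff (subst ?\<sigma> (fst ax))" "wff (subst ?\<sigma> (snd ax))"
    using assms by (auto intro: wf_subst)
  have \<rho>_eq: "(\<lambda>v. eval TM canon (?\<sigma> v)) = \<rho>" using g(2) by auto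
  have "subst ?\<sigma> (fst ax) \<in> Pos"
    using sat_subst[OF ok(1), of TM canon] sat1 sat_iff_Pos[OF wf(1)] unfolding \<rho>_eq by simp
  then have "subst ?\<sigma> (snd ax) \<in> Pos"
    using Pos_derives derives_instance[OF assms(1) ok wf] by blast
  then show "sat TM \<rho> (snd ax)"
    using sat_subst[OF ok(2), of TM canon] sat_iff_Pos[OF wf(2)] unfolding \<rho>_eq by simp
qed

lemma canon_counterexample: "assignment TM canon \<and> sat TM canon \<chi> \<and> \<not> sat TM canon \<chi>'"
  using sat_iff_Pos wf_chi chi_Pos chi'_Neg Pos_not_Neg unfolding assignment_def dom_TM by blast

end

theorem mainTheorem1:
  fixes arF :: "'f::countable \<Rightarrow> nat"
    and arP :: "'p::countable \<Rightarrow> nat"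
    and T :: "('f, 'p) cond set"
    and \<chi> \<chi>' :: "('f, 'p) fm"
  assumes "infinite (UNIV :: 'u set)"
    and "\<forall>c\<in>T. wf_fm arF arP (fst c) \<and> wf_fm arF arP (snd c)"
    and "wf_fm arF arP \<chi>" and "wf_fm arF arP \<chi>'"
  shows "provable arF arP (T \<union> logical_axioms) (\<chi>, \<chi>') \<or>
         (\<exists>M :: ('u, 'f, 'p) struc. admissible arF M \<and> (\<forall>c\<in>T. models_cond M c) \<and>
            (\<exists>\<rho>. assignment M \<rho> \<and> sat M \<rho> \<chi> \<and> \<not> sat M \<rho> \<chi>'))"
proof (cases "provable arF arP (T \<union> logical_axioms) (\<chi>, \<chi>')")
  case True then show ?thesis by simp
next
  case False
  interpret C: calculus arF arP "T \<union> logical_axioms" by unfold_locales auto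
  have "\<not> C.derives \<chi> \<chi>'" using False C.derives_provable by blast
  moreover obtain enc :: "nat \<Rightarrow> 'u" where "inj enc"
    using assms(1) infinite_countable_subset[of "UNIV :: 'u set"] by auto
  ultimately interpret M: term_model arF arP "T \<union> logical_axioms" \<chi> \<chi>' enc
    by unfold_locales (use assms in auto)
  have "\<forall>c\<in>T. models_cond M.TM c" using assms(2) M.TM_models_axiom by blast
  then show ?thesis using M.admissible_TM M.canon_counterexample by blast
qed

end
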